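(* Let $\gamma$ be a curve of finite total curvature in $\mathbb{E}^d$. Then there is a pair $(p,q)$ of (not necessarily distinct) points of $\gamma$ such that $\delta(\gamma)=\delta(p,q)$.
   Context: For distinct $p,q\in\gamma$, $\delta(p,q)=\mathrm{Len}(p,q)/|p-q|$ with $\mathrm{Len}(p,q)$ the (shorter) arclength distance along $\gamma$; the distortion is $\delta(\gamma)=\sup_{p\neq q}\delta(p,q)$. For a point $r\in\gamma$, $\delta(r,r):=\sec(\alpha(r)/2)$, where $\alpha(r)\in[0,\pi]$ is the turning angle at $r$, the angle between the one-sided unit tangent vectors $T_-(r)$ and $T_+(r)$ (which exist at every point of a finite total curvature curve), with $\alpha(r)=0$ at non-corner points; $\sec(\pi/2)=+\infty$. A curve has finite total curvature if the supremum over inscribed polygons of the sum of turning angles at interior vertices (angle in $[0,\pi]$ between $v_n-v_{n-1}$ and $v_{n+1}-v_n$) is finite. *)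

theory Defs
  imports "HOL-Analysis.Analysis"
begin

definition vec_angle :: "'a::euclidean_space \<Rightarrow> 'a \<Rightarrow> real" where
  "vec_angle u v = arccos ((u \<bullet> v) / (norm u * norm v))"

definition simple_closed_curve :: "(real \<Rightarrow> 'a::euclidean_space) \<Rightarrow> bool" where
  "simple_closed_curve g \<longleftrightarrow> continuous_on UNIV g \<and> (\<forall>t. g (t + 1) = g t) \<and> inj_on g {0..<1}"

definition curve_set :: "(real \<Rightarrow> 'a::euclidean_space) \<Rightarrow> 'a set" where
  "curve_set g = g ` {0..<1}"

definition finite_total_curvature :: "(real \<Rightarrow> 'a::euclidean_space) \<Rightarrow> bool" where
  "finite_total_curvature g \<longleftrightarrow> (\<exists>B. \<forall>(n::nat) (t::nat \<Rightarrow> real).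
     0 \<le> t 0 \<and> t n \<le> 1 \<and> (\<forall>i<n. t i < t (Suc i)) \<longrightarrow>
     (\<Sum>i\<in>{1..<n}. vec_angle (g (t i) - g (t (i - 1))) (g (t (Suc i)) - g (t i))) \<le> B)"

definition arc_len :: "(real \<Rightarrow> 'a::euclidean_space) \<Rightarrow> real \<Rightarrow> real \<Rightarrow> real" where
  "arc_len g a b = Sup {(\<Sum>i<n. dist (g (t i)) (g (t (Suc i)))) | (n::nat) (t::nat \<Rightarrow> real).
      t 0 = a \<and> t n = b \<and> (\<forall>i<n. t i \<le> t (Suc i))}"

definition param :: "(real \<Rightarrow> 'a::euclidean_space) \<Rightarrow> 'a \<Rightarrow> real" where
  "param g p = (THE s. s \<in> {0..<1} \<and> g s = p)"

definition Len :: "(real \<Rightarrow> 'a::euclidean_space) \<Rightarrow> 'a \<Rightarrow> 'a \<Rightarrow> real" where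
  "Len g p q = (let s = param g p; t = param g q in
     if s \<le> t then min (arc_len g s t) (arc_len g t (s + 1))
     else min (arc_len g t s) (arc_len g s (t + 1)))"

definition tangent_plus :: "(real \<Rightarrow> 'a::euclidean_space) \<Rightarrow> 'a \<Rightarrow> 'a" where
  "tangent_plus g r = (let s = param g r in
     Lim (at_right s) (\<lambda>t. (g t - g s) /\<^sub>R norm (g t - g s)))"

definition tangent_minus :: "(real \<Rightarrow> 'a::euclidean_space) \<Rightarrow> 'a \<Rightarrow> 'a" where
  "tangent_minus g r = (let s = param g r in
     Lim (at_left s) (\<lambda>t. (g s - g t) /\<^sub>R norm (g s - g t)))"

definition turning_angle :: "(real \<Rightarrow> 'a::euclidean_space) \<Rightarrow> 'a \<Rightarrow> real" where
  "turning_angle g r = vec_angle (tangent_minus g r) (tangent_plus g r)"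

definition delta :: "(real \<Rightarrow> 'a::euclidean_space) \<Rightarrow> 'a \<Rightarrow> 'a \<Rightarrow> ereal" where
  "delta g p q = (if p = q then
       (if turning_angle g p = pi then \<infinity> else ereal (1 / cos (turning_angle g p / 2)))
     else ereal (Len g p q / dist p q))"

definition distortion :: "(real \<Rightarrow> 'a::euclidean_space) \<Rightarrow> ereal" where
  "distortion g = (SUP (p, q) \<in> {(p, q). p \<in> curve_set g \<and> q \<in> curve_set g \<and> p \<noteq> q}. delta g p q)"

end

theory Submission
  imports Defs
begin

(* Near every parameter the turning of inscribed polygons tends to zero, since otherwise
   disjoint pieces of turning bounded below would accumulate and the total curvature would be
   infinite.  Hence the curve is rectifiable and has one-sided unit tangents T-(r), T+(r)
   everywhere, and delta is upper semicontinuous on pairs of curve points: off the diagonal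
   because Len and the chord depend continuously on the endpoints, and near a point r because
   there the curve is almost two segments meeting at the turning angle alpha(r), whose distortion
   is at most sec(alpha(r)/2).  Chords through r with endpoints equidistant from r show that
   sec(alpha(r)/2) does not exceed the distortion, so an upper semicontinuous function on the
   compact set of pairs attains the supremum. *)

section \<open>Angles between vectors\<close>

lemma inner_div_norms_bounds:
  fixes u v :: "'a::euclidean_space"
  shows "-1 \<le> (u \<bullet> v) / (norm u * norm v)" "(u \<bullet> v) / (norm u * norm v) \<le> 1"
proof -
  have "\<bar>u \<bullet> v\<bar> \<le> norm u * norm v"
    by (rule Cauchy_Schwarz_ineq2)
  then show "-1 \<le> (u \<bullet> v) / (norm u * norm v)" "(u \<bullet> v) / (norm u * norm v) \<le> 1"
    by (cases "u = 0 \<or> v = 0", simp, simp add: divide_simps abs_le_iff)+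
qed

lemma vec_angle_nonneg: "0 \<le> vec_angle u v"
  unfolding vec_angle_def using inner_div_norms_bounds by (rule arccos_lbound)

lemma vec_angle_le_pi: "vec_angle u v \<le> pi"
  unfolding vec_angle_def using inner_div_norms_bounds by (rule arccos_ubound)

lemma vec_angle_commute: "vec_angle u v = vec_angle v u"
  unfolding vec_angle_def by (simp add: inner_commute mult.commute)

lemma vec_angle_minus: "vec_angle (-u) (-v) = vec_angle u v"
  unfolding vec_angle_def by simp

lemma isCont_vec_angle_left:
  fixes u v :: "'a::euclidean_space"
  assumes "u \<noteq> 0"
  shows "isCont (\<lambda>u. vec_angle u v) u"
proof -
  have "continuous_on (-{0}) (\<lambda>u. vec_angle u v)"
  proof (cases "v = 0")
    case False
    have "continuous_on (-{0}) (\<lambda>u. (u \<bullet> v) / (norm u * norm v))"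
      using False by (intro continuous_intros) auto
    moreover have "(\<lambda>u. (u \<bullet> v) / (norm u * norm v)) ` (-{0}) \<subseteq> {-1..1}"
      using inner_div_norms_bounds[of _ v] by auto
    ultimately show ?thesis
      unfolding vec_angle_def by (rule continuous_on_compose2[OF continuous_on_arccos'])
  qed (simp add: vec_angle_def)
  then show ?thesis
    using assms by (simp add: continuous_on_eq_continuous_at open_Compl)
qed

lemma cos_half_vec_angle_nonneg: "0 \<le> cos (vec_angle u v / 2)"
  using vec_angle_nonneg[of u v] vec_angle_le_pi[of u v] by (intro cos_ge_zero) auto

lemma cos_half_vec_angle_eq_0_iff: "cos (vec_angle u v / 2) = 0 \<longleftrightarrow> vec_angle u v = pi"
proof
  assume "cos (vec_angle u v / 2) = 0"
  moreover have "vec_angle u v < pi \<Longrightarrow> 0 < cos (vec_angle u v / 2)"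
    using vec_angle_nonneg[of u v] by (intro cos_gt_zero_pi) auto
  ultimately show "vec_angle u v = pi"
    using vec_angle_le_pi[of u v] by fastforce
qed simp

lemma cos_half_vec_angle_unit:
  fixes U V :: "'a::euclidean_space"
  assumes "norm U = 1" "norm V = 1"
  shows "(cos (vec_angle U V / 2))\<^sup>2 = (1 + U \<bullet> V) / 2"
proof -
  have "cos (vec_angle U V) = U \<bullet> V"
    using inner_div_norms_bounds[of U V] assms by (simp add: vec_angle_def)
  then show ?thesis
    using cos_double_cos[of "vec_angle U V / 2"] by simp
qed

lemma norm_add_unit_eq_cos_half_vec_angle:
  fixes U V :: "'a::euclidean_space"
  assumes "norm U = 1" "norm V = 1"
  shows "norm (U + V) = 2 * cos (vec_angle U V / 2)"
proof -
  have "U \<bullet> U = 1" "V \<bullet> V = 1"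
    using assms by (simp_all flip: power2_norm_eq_inner)
  have "(norm (U + V))\<^sup>2 = (U + V) \<bullet> (U + V)"
    by (rule power2_norm_eq_inner)
  also have "\<dots> = U \<bullet> U + V \<bullet> V + 2 * (U \<bullet> V)"
    by (simp add: inner_add_left inner_add_right inner_commute)
  also have "\<dots> = 2 + 2 * (U \<bullet> V)"
    using \<open>U \<bullet> U = 1\<close> \<open>V \<bullet> V = 1\<close> by simp
  also have "\<dots> = (2 * cos (vec_angle U V / 2))\<^sup>2"
    using cos_half_vec_angle_unit[OF assms] by (simp add: power_mult_distrib)
  finally show ?thesis
    using cos_half_vec_angle_nonneg[of U V] by (auto intro: power2_eq_imp_eq)
qed

lemma norm_scaleR_add_ge_cos_half_vec_angle:
  fixes U V :: "'a::euclidean_space"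
  assumes U: "norm U = 1" and V: "norm V = 1" and "0 \<le> A" "0 \<le> B"
  shows "(A + B) * cos (vec_angle U V / 2) \<le> norm (A *\<^sub>R U + B *\<^sub>R V)"
proof -
  define k where "k = U \<bullet> V"
  have "k \<le> 1"
    using norm_cauchy_schwarz[of U V] U V by (simp add: k_def)
  have "U \<bullet> U = 1" "V \<bullet> V = 1"
    using U V by (simp_all flip: power2_norm_eq_inner)
  have "(norm (A *\<^sub>R U + B *\<^sub>R V))\<^sup>2 = (A *\<^sub>R U + B *\<^sub>R V) \<bullet> (A *\<^sub>R U + B *\<^sub>R V)"
    by (rule power2_norm_eq_inner)
  also have "\<dots> = A * A * (U \<bullet> U) + B * B * (V \<bullet> V) + 2 * A * B * (U \<bullet> V)"
    by (simp add: inner_add_left inner_add_right inner_commute algebra_simps)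
  also have "\<dots> = A\<^sup>2 + B\<^sup>2 + 2 * A * B * k"
    using \<open>U \<bullet> U = 1\<close> \<open>V \<bullet> V = 1\<close> by (simp add: k_def power2_eq_square)
  finally have "(norm (A *\<^sub>R U + B *\<^sub>R V))\<^sup>2 = A\<^sup>2 + B\<^sup>2 + 2 * A * B * k" .
  moreover have "((A + B) * cos (vec_angle U V / 2))\<^sup>2 = (A + B)\<^sup>2 * (1 + k) / 2"
    using cos_half_vec_angle_unit[OF U V] by (simp add: power_mult_distrib k_def)
  moreover have "A\<^sup>2 + B\<^sup>2 + 2 * A * B * k - (A + B)\<^sup>2 * (1 + k) / 2 = (1 - k) * (A - B)\<^sup>2 / 2"
    by (simp add: power2_eq_square algebra_simps)
  moreover have "0 \<le> (1 - k) * (A - B)\<^sup>2 / 2"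
    using \<open>k \<le> 1\<close> by simp
  ultimately have "((A + B) * cos (vec_angle U V / 2))\<^sup>2 \<le> (norm (A *\<^sub>R U + B *\<^sub>R V))\<^sup>2"
    by linarith
  then show ?thesis
    by (rule power2_le_imp_le) simp
qed

lemma norm_sgn_le_1: "norm (sgn x) \<le> 1"
  by (cases "x = 0") (simp_all add: norm_sgn)

lemma inner_sgn_self: "x \<bullet> sgn x = norm x"
  by (cases "x = 0") (simp_all add: sgn_div_norm dot_square_norm power2_eq_square)

lemma norm_sgn_diff_le_vec_angle:
  fixes u v :: "'a::euclidean_space"
  shows "norm (sgn u - sgn v) \<le> vec_angle u v"
proof (cases "u = 0 \<or> v = 0")
  case True
  have "norm (sgn u - sgn v) \<le> 1"
    using True by (auto simp: norm_sgn)
  also have "1 \<le> pi / 2"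
    using pi_gt3 by simp
  finally show ?thesis
    using True by (auto simp: vec_angle_def)
next
  case False
  define a where "a = vec_angle u v"
  have a: "0 \<le> a" "a \<le> pi"
    using vec_angle_nonneg vec_angle_le_pi by (auto simp: a_def)
  have "cos a = (u \<bullet> v) / (norm u * norm v)"
    using inner_div_norms_bounds[of u v] by (simp add: a_def vec_angle_def)
  also have "\<dots> = sgn u \<bullet> sgn v"
    by (simp add: sgn_div_norm divide_simps mult.commute)
  finally have "cos a = sgn u \<bullet> sgn v" .
  moreover have "sgn u \<bullet> sgn u = 1" "sgn v \<bullet> sgn v = 1"
    using False by (simp_all add: norm_sgn flip: power2_norm_eq_inner)
  moreover have "(norm (sgn u - sgn v))\<^sup>2 = (sgn u - sgn v) \<bullet> (sgn u - sgn v)"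
    by (rule power2_norm_eq_inner)
  moreover have "\<dots> = sgn u \<bullet> sgn u + sgn v \<bullet> sgn v - 2 * (sgn u \<bullet> sgn v)"
    by (simp add: inner_diff_left inner_diff_right inner_commute)
  ultimately have "(norm (sgn u - sgn v))\<^sup>2 = 2 - 2 * cos a"
    by simp
  also have "\<dots> = (2 * sin (a / 2))\<^sup>2"
    using cos_double_sin[of "a / 2"] by (simp add: power_mult_distrib)
  also have "\<dots> \<le> a\<^sup>2"
    using a sin_x_le_x[of "a / 2"] sin_ge_zero[of "a / 2"] by (intro power_mono) auto
  finally show ?thesis
    using a by (simp add: a_def power2_le_iff_abs_le)
qed

lemma norm_sgn_approx:
  fixes w u :: "'a::real_normed_vector"
  assumes "0 < l" "norm u = 1"
  shows "norm (sgn w - u) \<le> 2 * norm (w - l *\<^sub>R u) / l"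
proof -
  have "\<bar>l - norm w\<bar> \<le> norm (w - l *\<^sub>R u)"
    using norm_triangle_ineq3[of "l *\<^sub>R u" w] assms by (simp add: norm_minus_commute)
  have "norm (sgn w - w /\<^sub>R l) \<le> norm (w - l *\<^sub>R u) / l"
  proof (cases "w = 0")
    case False
    have "sgn w - w /\<^sub>R l = (inverse (norm w) - inverse l) *\<^sub>R w"
      by (simp add: sgn_div_norm scaleR_diff_left)
    then have "norm (sgn w - w /\<^sub>R l) = \<bar>l - norm w\<bar> / l"
      using False assms by (simp add: field_simps abs_div)
    then show ?thesis
      using \<open>\<bar>l - norm w\<bar> \<le> norm (w - l *\<^sub>R u)\<close> assms by (simp add: divide_right_mono)
  qed (use assms in simp)
  moreover have "norm (w /\<^sub>R l - u) = norm (w - l *\<^sub>R u) / l"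
  proof -
    have "w /\<^sub>R l - u = inverse l *\<^sub>R (w - l *\<^sub>R u)"
      using assms by (simp add: scaleR_diff_right)
    then show ?thesis
      using assms by (simp add: divide_inverse_commute)
  qed
  moreover have "norm (sgn w - u) \<le> norm (sgn w - w /\<^sub>R l) + norm (w /\<^sub>R l - u)"
    using norm_triangle_ineq[of "sgn w - w /\<^sub>R l" "w /\<^sub>R l - u"] by simp
  ultimately show ?thesis
    by linarith
qed

lemma norm_sgn_add_diff_le:
  fixes e1 e2 :: "'a::real_normed_vector"
  assumes "e1 \<noteq> 0"
  shows "norm (sgn (e1 + e2) - sgn e1) \<le> 2 * norm (sgn e2 - sgn e1)"
proof -
  define l where "l = norm e1 + norm e2"
  have "0 < l"
    using assms by (simp add: l_def add_pos_nonneg)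
  have "e1 + e2 - l *\<^sub>R sgn e1 = norm e2 *\<^sub>R (sgn e2 - sgn e1)"
    using assms by (cases "e2 = 0") (simp_all add: l_def sgn_div_norm algebra_simps)
  then have "norm (sgn (e1 + e2) - sgn e1) \<le> 2 * (norm e2 * norm (sgn e2 - sgn e1) / l)"
    using norm_sgn_approx[OF \<open>0 < l\<close>, of "sgn e1" "e1 + e2"] assms by (simp add: norm_sgn)
  moreover have "norm e2 * norm (sgn e2 - sgn e1) \<le> l * norm (sgn e2 - sgn e1)"
    by (intro mult_right_mono) (auto simp: l_def)
  then have "norm e2 * norm (sgn e2 - sgn e1) / l \<le> norm (sgn e2 - sgn e1)"
    using \<open>0 < l\<close> by (simp add: divide_simps mult.commute)
  ultimately show ?thesis
    by linarith
qed

lemma scaleR_norm_sgn: "norm x *\<^sub>R sgn x = (x::'a::real_normed_vector)"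
  by (cases "x = 0") (simp_all add: sgn_div_norm)

lemma norm_scaleR_add_ge_approx:
  fixes U V u v :: "'a::euclidean_space"
  assumes "norm U = 1" "norm V = 1" "norm (u - U) < \<eta>" "norm (v - V) < \<eta>" "0 \<le> A" "0 \<le> B"
  shows "(A + B) * (cos (vec_angle U V / 2) - \<eta>) \<le> norm (A *\<^sub>R u + B *\<^sub>R v)"
proof -
  have "norm (A *\<^sub>R (u - U) + B *\<^sub>R (v - V)) \<le> A * norm (u - U) + B * norm (v - V)"
    using norm_triangle_ineq[of "A *\<^sub>R (u - U)" "B *\<^sub>R (v - V)"] assms(5,6) by simp
  also have "\<dots> \<le> A * \<eta> + B * \<eta>"
    using assms(3-6) by (intro add_mono mult_left_mono) auto
  also have "\<dots> = (A + B) * \<eta>"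
    by (simp add: distrib_right)
  finally have "norm (A *\<^sub>R (u - U) + B *\<^sub>R (v - V)) \<le> (A + B) * \<eta>" .
  moreover have "A *\<^sub>R U + B *\<^sub>R V = (A *\<^sub>R u + B *\<^sub>R v) - (A *\<^sub>R (u - U) + B *\<^sub>R (v - V))"
    by (simp add: algebra_simps)
  then have "norm (A *\<^sub>R U + B *\<^sub>R V) \<le> norm (A *\<^sub>R u + B *\<^sub>R v) + norm (A *\<^sub>R (u - U) + B *\<^sub>R (v - V))"
    by (metis norm_triangle_ineq4)
  moreover have "(A + B) * cos (vec_angle U V / 2) \<le> norm (A *\<^sub>R U + B *\<^sub>R V)"
    using assms by (intro norm_scaleR_add_ge_cos_half_vec_angle) auto
  ultimately show ?thesis
    by (simp add: right_diff_distrib)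
qed

lemma dist_le_equal_legs:
  fixes p q r U V :: "'a::real_normed_vector"
  assumes "dist p r = a" "dist r q = a" "norm (sgn (r - p) - U) < \<eta>" "norm (sgn (q - r) - V) < \<eta>"
  shows "dist p q \<le> a * (norm (U + V) + 2 * \<eta>)"
proof -
  have "0 \<le> a"
    using assms(1) by auto
  have "q - p = a *\<^sub>R ((U + V) + (sgn (r - p) - U) + (sgn (q - r) - V))"
    using assms(1,2) scaleR_norm_sgn[of "r - p"] scaleR_norm_sgn[of "q - r"]
    by (simp add: dist_norm norm_minus_commute[of p r] norm_minus_commute[of r q] scaleR_right_distrib)
  then have "dist p q = a * norm ((U + V) + (sgn (r - p) - U) + (sgn (q - r) - V))"
    unfolding dist_norm norm_minus_commute[of p q] using \<open>0 \<le> a\<close> by simp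
  also have "\<dots> \<le> a * (norm (U + V) + norm (sgn (r - p) - U) + norm (sgn (q - r) - V))"
    using \<open>0 \<le> a\<close> norm_triangle_ineq[of "(U + V) + (sgn (r - p) - U)" "sgn (q - r) - V"]
      norm_triangle_ineq[of "U + V" "sgn (r - p) - U"] by (intro mult_left_mono) auto
  also have "\<dots> \<le> a * (norm (U + V) + 2 * \<eta>)"
    using \<open>0 \<le> a\<close> assms(3,4) by (intro mult_left_mono) auto
  finally show ?thesis .
qed

section \<open>Inscribed polygons\<close>

fun polygon_length :: "'a::metric_space list \<Rightarrow> real" where
  "polygon_length (a # b # r) = dist a b + polygon_length (b # r)"
| "polygon_length _ = 0"

fun polygon_turning :: "'a::euclidean_space list \<Rightarrow> real" where
  "polygon_turning (a # b # c # r) = vec_angle (b - a) (c - b) + polygon_turning (b # c # r)"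
| "polygon_turning _ = 0"

lemma polygon_length_nonneg: "0 \<le> polygon_length ps"
  by (induction ps rule: polygon_length.induct) auto

lemma polygon_turning_nonneg: "0 \<le> polygon_turning ps"
  by (induction ps rule: polygon_turning.induct) (auto intro: add_nonneg_nonneg vec_angle_nonneg)

lemma polygon_length_Cons: "polygon_length (a # ps) = (if ps = [] then 0 else dist a (hd ps)) + polygon_length ps"
  by (cases ps) auto

lemma polygon_length_append:
  "polygon_length (xs @ ys) =
     polygon_length xs + polygon_length ys + (if xs \<noteq> [] \<and> ys \<noteq> [] then dist (last xs) (hd ys) else 0)"
  by (induction xs rule: polygon_length.induct) (auto simp: polygon_length_Cons)

lemma polygon_length_snoc: "xs \<noteq> [] \<Longrightarrow> polygon_length (xs @ [z]) = polygon_length xs + dist (last xs) z"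
  by (simp add: polygon_length_append)

lemma polygon_length_insert: "polygon_length (xs @ ys) \<le> polygon_length (xs @ [z] @ ys)"
  using dist_triangle[of "last xs" "hd ys" z]
  by (auto simp: polygon_length_append polygon_length_Cons polygon_length_nonneg)

lemma polygon_length_take_drop:
  "polygon_length ps = polygon_length (take (k + 1) ps) + polygon_length (drop k ps)"
proof (induction k arbitrary: ps)
  case 0
  then show ?case by (cases ps rule: polygon_length.cases) auto
next
  case (Suc k)
  show ?case
  proof (cases ps)
    case (Cons a qs)
    then show ?thesis
      using Suc.IH[of qs] by (cases qs) auto
  qed simp
qed

lemma polygon_turning_take_drop:
  "polygon_turning ps = polygon_turning (take (k + 2) ps) + polygon_turning (drop k ps)"
proof (induction k arbitrary: ps)
  case 0
  then show ?case by (cases ps rule: polygon_turning.cases) auto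
next
  case (Suc k)
  show ?case
  proof (cases ps)
    case (Cons a qs)
    then show ?thesis
      using Suc.IH[of qs] by (cases qs rule: polygon_turning.cases) auto
  qed simp
qed

lemma polygon_turning_Cons_ge: "polygon_turning ps \<le> polygon_turning (a # ps)"
  by (cases ps rule: polygon_turning.cases) (auto intro: vec_angle_nonneg polygon_turning_nonneg)

lemma polygon_turning_append_ge:
  "polygon_turning xs + polygon_turning ys \<le> polygon_turning (xs @ ys)"
proof (induction xs rule: polygon_turning.induct)
  case ("2_2" a)
  then show ?case using polygon_turning_Cons_ge[of ys a] by simp
next
  case ("2_3" a b)
  then show ?case
    using polygon_turning_Cons_ge[of ys b] polygon_turning_Cons_ge[of "b # ys" a] by simp
qed auto

lemma polygon_turning_snoc:
  "polygon_turning (ps @ [a, b, c]) = polygon_turning (ps @ [a, b]) + vec_angle (b - a) (c - b)"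
  by (induction ps rule: polygon_turning.induct) auto

lemma polygon_turning_rev: "polygon_turning (rev ps) = polygon_turning ps"
proof (induction ps rule: polygon_turning.induct)
  case (1 a b c r)
  have "vec_angle (b - c) (a - b) = vec_angle (b - a) (c - b)"
    using vec_angle_minus[of "c - b" "b - a"] by (simp add: vec_angle_commute)
  then show ?case
    using 1 polygon_turning_snoc[of "rev r" c b a] by simp
qed auto

lemma polygon_turning_eq_sum:
  "polygon_turning ps = (\<Sum>i = 1..<length ps - 1. vec_angle (ps ! i - ps ! (i - 1)) (ps ! Suc i - ps ! i))"
proof (induction ps rule: polygon_turning.induct)
  case (1 a b c r)
  define f where "f i = vec_angle ((a # b # c # r) ! i - (a # b # c # r) ! (i - 1))
      ((a # b # c # r) ! Suc i - (a # b # c # r) ! i)" for i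
  have "(\<Sum>i = 1..<length (a # b # c # r) - 1. f i) = (\<Sum>i = 1..<Suc (Suc (length r)). f i)"
    by simp
  also have "\<dots> = f 1 + (\<Sum>i = Suc 1..<Suc (Suc (length r)). f i)"
    by (rule sum.atLeast_Suc_lessThan) simp
  also have "(\<Sum>i = Suc 1..<Suc (Suc (length r)). f i) = (\<Sum>i = 1..<Suc (length r). f (Suc i))"
    by (rule sum.shift_bounds_Suc_ivl)
  also have "\<dots> = (\<Sum>i = 1..<length (b # c # r) - 1.
      vec_angle ((b # c # r) ! i - (b # c # r) ! (i - 1)) ((b # c # r) ! Suc i - (b # c # r) ! i))"
    by (intro sum.cong) (auto simp: f_def nth_Cons split: nat.split)
  finally show ?case
    using 1 by (simp add: f_def)
qed auto

lemma polygon_length_map_upt: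
  "polygon_length (map f [0..<Suc n]) = (\<Sum>i<n. dist (f i) (f (Suc i)))"
proof (induction n)
  case (Suc n)
  have "map f [0..<Suc (Suc n)] = map f [0..<Suc n] @ [f (Suc n)]"
    by simp
  then show ?case
    using Suc by (simp add: polygon_length_snoc last_map del: upt_Suc)
qed simp

lemma sorted_wrt_less_remdups_adj: "sorted xs \<Longrightarrow> sorted_wrt (<) (remdups_adj xs)"
  by (induction xs rule: remdups_adj.induct) (auto simp: le_less)

lemma polygon_length_map_remdups_adj: "polygon_length (map f (remdups_adj xs)) = polygon_length (map f xs)"
proof (induction xs)
  case (Cons x xs)
  show ?case
  proof (cases "remdups_adj xs")
    case (Cons y ys)
    moreover have "xs \<noteq> []" "hd xs = y"
      using Cons hd_remdups_adj[of xs] by auto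
    ultimately show ?thesis
      using Cons.IH by (auto simp: remdups_adj_Cons polygon_length_Cons hd_map)
  qed (simp add: remdups_adj_Cons)
qed simp

lemma sorted_Cons_dropWhile_le:
  fixes xs :: "'a::linorder list"
  assumes "sorted xs"
  shows "sorted (c # dropWhile (\<lambda>y. y \<le> c) xs)"
proof (cases "dropWhile (\<lambda>y. y \<le> c) xs")
  case (Cons y ys)
  then have "c < y"
    using hd_dropWhile[of "\<lambda>y. y \<le> c" xs] by simp
  moreover have "sorted (y # ys)"
    using sorted_dropWhile[OF assms, of "\<lambda>y. y \<le> c"] Cons by simp
  ultimately show ?thesis
    using Cons by (auto intro: order.trans[OF less_imp_le])
next
  case Nil
  then show ?thesis by (simp del: dropWhile_eq_Nil_conv)
qed

lemma polygon_length_append_Cons: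
  "polygon_length (xs @ z # ys) = polygon_length (xs @ [z]) + polygon_length (z # ys)"
  by (induction xs rule: polygon_length.induct) auto

lemma sorted_takeWhile_le_snoc: "sorted xs \<Longrightarrow> sorted (takeWhile (\<lambda>y. y \<le> c) xs @ [c])"
  by (auto simp: sorted_append dest: set_takeWhileD intro: sorted_takeWhile)

lemma polygon_length_map_split:
  fixes g :: "real \<Rightarrow> 'a::metric_space"
  shows "polygon_length (map g xs) \<le>
    polygon_length (map g (takeWhile (\<lambda>y. y \<le> c) xs @ [c])) + polygon_length (map g (c # dropWhile (\<lambda>y. y \<le> c) xs))"
proof -
  have "map g xs = map g (takeWhile (\<lambda>y. y \<le> c) xs) @ map g (dropWhile (\<lambda>y. y \<le> c) xs)"
    by (metis map_append takeWhile_dropWhile_id)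
  then show ?thesis
    using polygon_length_insert[of "map g (takeWhile (\<lambda>y. y \<le> c) xs)" "map g (dropWhile (\<lambda>y. y \<le> c) xs)" "g c"]
      polygon_length_append_Cons[of "map g (takeWhile (\<lambda>y. y \<le> c) xs)" "g c" "map g (dropWhile (\<lambda>y. y \<le> c) xs)"]
    by simp
qed

lemma inner_ge_dist_if_sgn_close:
  fixes a b :: "'a::euclidean_space"
  assumes "norm (sgn (b - a) - w) \<le> \<theta>"
  shows "(1 - \<theta>) * dist a b \<le> (b - a) \<bullet> w"
proof -
  have "(b - a) \<bullet> (sgn (b - a) - w) \<le> norm (b - a) * \<theta>"
    using norm_cauchy_schwarz[of "b - a" "sgn (b - a) - w"] assms
    by (meson mult_left_mono norm_ge_zero order_trans)
  then show ?thesis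
    by (simp add: inner_diff_right inner_sgn_self dist_norm norm_minus_commute algebra_simps)
qed

text \<open>Every edge direction stays within the turning of the first one, so each edge contributes
  at least \<open>1 - \<theta>\<close> times its length to the projection onto that direction.\<close>
lemma polygon_length_le_projection:
  fixes a b :: "'a::euclidean_space"
  assumes "norm (sgn (b - a) - w) + polygon_turning (a # b # ps) \<le> \<theta>"
  shows "(1 - \<theta>) * polygon_length (a # b # ps) \<le> (last (b # ps) - a) \<bullet> w"
  using assms
proof (induction ps arbitrary: a b)
  case Nil
  then show ?case
    using inner_ge_dist_if_sgn_close[of b a w \<theta>] by simp
next
  case (Cons c ps)
  have "norm (sgn (c - b) - w) \<le> norm (sgn (c - b) - sgn (b - a)) + norm (sgn (b - a) - w)"
    using norm_triangle_ineq[of "sgn (c - b) - sgn (b - a)" "sgn (b - a) - w"] by simp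
  moreover have "norm (sgn (c - b) - sgn (b - a)) \<le> vec_angle (b - a) (c - b)"
    using norm_sgn_diff_le_vec_angle[of "c - b" "b - a"] by (simp add: vec_angle_commute)
  ultimately have "(1 - \<theta>) * polygon_length (b # c # ps) \<le> (last (c # ps) - b) \<bullet> w"
    using Cons by (intro Cons.IH) simp
  moreover have "norm (sgn (b - a) - w) \<le> \<theta>"
    using Cons.prems polygon_turning_nonneg[of "b # c # ps"] vec_angle_nonneg[of "b - a" "c - b"]
    by simp
  then have "(1 - \<theta>) * dist a b \<le> (b - a) \<bullet> w"
    by (rule inner_ge_dist_if_sgn_close)
  ultimately show ?case
    by (simp add: inner_diff_left algebra_simps)
qed

lemma polygon_length_le_chord:
  fixes ps :: "'a::euclidean_space list"
  assumes "ps \<noteq> []" "polygon_turning ps \<le> \<theta>"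
  shows "(1 - \<theta>) * polygon_length ps \<le> dist (hd ps) (last ps)"
proof (cases ps rule: polygon_length.cases)
  case (1 a b r)
  have "(1 - \<theta>) * polygon_length ps \<le> (last (b # r) - a) \<bullet> sgn (b - a)"
    using polygon_length_le_projection[where w="sgn (b - a)"] assms 1 by simp
  also have "\<dots> \<le> norm (last (b # r) - a)"
    using norm_cauchy_schwarz[of "last (b # r) - a" "sgn (b - a)"] norm_sgn_le_1[of "b - a"]
    by (metis mult.right_neutral mult_left_mono norm_ge_zero order_trans)
  finally show ?thesis
    using 1 by (simp add: dist_norm norm_minus_commute)
qed (use assms in auto)

lemma polygon_turning_threshold:
  assumes "0 \<le> c" "c < polygon_turning ps"
  obtains j where "2 \<le> j" "j < length ps" "polygon_turning (take j ps) \<le> c"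
    "c < polygon_turning (take (j + 1) ps)"
proof -
  define P where "P j \<longleftrightarrow> j \<le> length ps \<and> polygon_turning (take j ps) \<le> c" for j
  define j where "j = (GREATEST j. P j)"
  have "2 \<le> length ps"
    using assms by (cases ps rule: polygon_turning.cases) auto
  then have "P 2"
    using assms(1) by (cases ps rule: polygon_turning.cases) (auto simp: P_def)
  have bound: "\<forall>y. P y \<longrightarrow> y \<le> length ps"
    by (simp add: P_def)
  have "P j" "2 \<le> j"
    using GreatestI_nat[of P 2 "length ps"] Greatest_le_nat[of P 2 "length ps"] \<open>P 2\<close> bound
    by (auto simp: j_def)
  moreover have "\<not> P (j + 1)"
    using Greatest_le_nat[of P "j + 1" "length ps"] bound by (force simp: j_def)
  moreover have "j < length ps"
    using \<open>P j\<close> assms(2) by (auto simp: P_def le_less)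
  ultimately show ?thesis
    using that by (auto simp: P_def)
qed

text \<open>Cut off the longest initial piece of turning at most \<open>1/2\<close>: its length is at most twice
  its chord, and the next vertex uses up turning more than \<open>1/2\<close>.\<close>
lemma polygon_length_le_diameter_turning:
  fixes ps :: "'a::euclidean_space list"
  assumes "0 \<le> D" "\<forall>x\<in>set ps. \<forall>y\<in>set ps. dist x y \<le> D"
  shows "polygon_length ps \<le> 2 * D * (2 * polygon_turning ps + 1)"
  using assms(2)
proof (induction "length ps" arbitrary: ps rule: less_induct)
  case less
  have short: "polygon_length qs \<le> 2 * D"
    if "qs \<noteq> []" "set qs \<subseteq> set ps" "polygon_turning qs \<le> 1/2" for qs
  proof -
    have "(1 - 1/2) * polygon_length qs \<le> dist (hd qs) (last qs)"
      using that by (intro polygon_length_le_chord) auto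
    also have "\<dots> \<le> D"
      using less.prems that hd_in_set last_in_set by blast
    finally show ?thesis by simp
  qed
  show ?case
  proof (cases "polygon_turning ps \<le> 1/2")
    case True
    then show ?thesis
      using short[of ps] assms(1) polygon_turning_nonneg[of ps]
      by (cases "ps = []") (auto intro: order_trans[OF _ mult_left_mono[of 1]])
  next
    case False
    obtain j where j: "2 \<le> j" "j < length ps" "polygon_turning (take j ps) \<le> 1/2"
      "1/2 < polygon_turning (take (j + 1) ps)"
      by (rule polygon_turning_threshold[of "1/2" ps]) (use False in auto)
    define R where "R = drop (j - 1) ps"
    have "polygon_turning ps = polygon_turning (take (j + 1) ps) + polygon_turning R"
      using polygon_turning_take_drop[of ps "j - 1"] j(1) by (simp add: R_def)
    moreover have "polygon_length ps = polygon_length (take j ps) + polygon_length R"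
      using polygon_length_take_drop[of ps "j - 1"] j(1) by (simp add: R_def)
    moreover have "polygon_length R \<le> 2 * D * (2 * polygon_turning R + 1)"
      using less.prems j(1,2) by (intro less.hyps) (auto simp: R_def dest: in_set_dropD)
    moreover have "polygon_length (take j ps) \<le> 2 * D"
      using j(1-3) by (intro short) (auto dest: in_set_takeD)
    moreover have "2 * D * (2 * polygon_turning R + 1) + 2 * D \<le> 2 * D * (2 * polygon_turning ps + 1)"
      using calculation(1) j(4) assms(1) by (simp add: algebra_simps mult_left_mono)
    ultimately show ?thesis
      by linarith
  qed
qed

section \<open>Arc length\<close>

definition inscribed_lengths :: "(real \<Rightarrow> 'a::metric_space) \<Rightarrow> real \<Rightarrow> real \<Rightarrow> real set" where
  "inscribed_lengths g a b =
     {polygon_length (map g xs) | xs. xs \<noteq> [] \<and> hd xs = a \<and> last xs = b \<and> sorted xs}"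

lemma arc_len_eq_Sup_inscribed_lengths: "arc_len g a b = Sup (inscribed_lengths g a b)"
proof -
  have "{(\<Sum>i<n. dist (g (t i)) (g (t (Suc i)))) | (n::nat) (t::nat \<Rightarrow> real).
      t 0 = a \<and> t n = b \<and> (\<forall>i<n. t i \<le> t (Suc i))} = inscribed_lengths g a b"
  proof (intro set_eqI iffI)
    fix y assume "y \<in> {(\<Sum>i<n. dist (g (t i)) (g (t (Suc i)))) | (n::nat) (t::nat \<Rightarrow> real).
      t 0 = a \<and> t n = b \<and> (\<forall>i<n. t i \<le> t (Suc i))}"
    then obtain n t where nt: "y = (\<Sum>i<n. dist (g (t i)) (g (t (Suc i))))" "t 0 = a" "t n = b"
      "\<forall>i<n. t i \<le> t (Suc i)" by blast
    define xs where "xs = map t [0..<Suc n]"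
    have "sorted xs"
      unfolding sorted_iff_nth_Suc using nt(4) by (simp add: xs_def del: upt_Suc)
    have nth: "xs ! i = t i" if "i \<le> n" for i
      using that by (simp add: xs_def del: upt_Suc)
    have "length xs = Suc n"
      by (simp add: xs_def)
    then have "xs \<noteq> []"
      by auto
    then have "hd xs = a" "last xs = b"
      using nth[of 0] nth[of n] nt(2,3) \<open>length xs = Suc n\<close> by (simp_all add: hd_conv_nth last_conv_nth)
    moreover have "y = polygon_length (map g xs)"
      using polygon_length_map_upt[of "g \<circ> t" n] nt(1) by (simp add: xs_def del: upt_Suc)
    ultimately show "y \<in> inscribed_lengths g a b"
      using \<open>sorted xs\<close> \<open>xs \<noteq> []\<close> by (auto simp: inscribed_lengths_def)
  next
    fix y assume "y \<in> inscribed_lengths g a b"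
    then obtain xs where xs: "y = polygon_length (map g xs)" "xs \<noteq> []" "hd xs = a" "last xs = b"
      "sorted xs" by (auto simp: inscribed_lengths_def)
    define n where "n = length xs - 1"
    define t where "t = (\<lambda>i. xs ! i)"
    have "map t [0..<Suc n] = xs"
      using xs(2) by (simp add: n_def t_def map_nth)
    then have "map (g \<circ> t) [0..<Suc n] = map g xs"
      by (simp del: upt_Suc flip: map_map)
    then have "y = (\<Sum>i<n. dist (g (t i)) (g (t (Suc i))))"
      using polygon_length_map_upt[of "g \<circ> t" n] xs(1) by (simp del: upt_Suc)
    moreover have "t 0 = a" "t n = b"
      using xs by (auto simp: t_def n_def hd_conv_nth last_conv_nth)
    moreover have "\<forall>i<n. t i \<le> t (Suc i)"
      using xs(5) by (auto simp: t_def n_def sorted_iff_nth_Suc)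
    ultimately show "y \<in> {(\<Sum>i<n. dist (g (t i)) (g (t (Suc i)))) | (n::nat) (t::nat \<Rightarrow> real).
      t 0 = a \<and> t n = b \<and> (\<forall>i<n. t i \<le> t (Suc i))}" by blast
  qed
  then show ?thesis
    unfolding arc_len_def by simp
qed

lemma sorted_subset_hd_last: "sorted xs \<Longrightarrow> xs \<noteq> [] \<Longrightarrow> set xs \<subseteq> {hd xs..last xs}"
  by (auto simp: in_set_conv_nth hd_conv_nth last_conv_nth sorted_nth_mono)

locale locally_rectifiable =
  fixes g :: "real \<Rightarrow> 'a::euclidean_space"
  assumes bdd_above_inscribed_lengths: "bdd_above (inscribed_lengths g a b)"
begin

lemma polygon_length_le_arc_len:
  "xs \<noteq> [] \<Longrightarrow> hd xs = a \<Longrightarrow> last xs = b \<Longrightarrow> sorted xs \<Longrightarrow> polygon_length (map g xs) \<le> arc_len g a b"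
  unfolding arc_len_eq_Sup_inscribed_lengths
  by (rule cSup_upper[OF _ bdd_above_inscribed_lengths]) (auto simp: inscribed_lengths_def)

lemma arc_len_le:
  assumes "a \<le> b"
    and "\<And>xs. xs \<noteq> [] \<Longrightarrow> hd xs = a \<Longrightarrow> last xs = b \<Longrightarrow> sorted xs \<Longrightarrow> polygon_length (map g xs) \<le> C"
  shows "arc_len g a b \<le> C"
  unfolding arc_len_eq_Sup_inscribed_lengths
proof (rule cSup_least)
  show "inscribed_lengths g a b \<noteq> {}"
    using \<open>a \<le> b\<close> by (auto simp: inscribed_lengths_def intro!: exI[of _ "[a, b]"])
qed (use assms(2) in \<open>auto simp: inscribed_lengths_def\<close>)

lemma dist_add_dist_le_arc_len: "a \<le> c \<Longrightarrow> c \<le> b \<Longrightarrow> dist (g a) (g c) + dist (g c) (g b) \<le> arc_len g a b"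
  using polygon_length_le_arc_len[of "[a, c, b]" a b] by simp

lemma dist_le_arc_len: "a \<le> b \<Longrightarrow> dist (g a) (g b) \<le> arc_len g a b"
  using polygon_length_le_arc_len[of "[a, b]" a b] by simp

lemma arc_len_nonneg: "a \<le> b \<Longrightarrow> 0 \<le> arc_len g a b"
  using dist_le_arc_len[of a b] zero_le_dist[of "g a" "g b"] by linarith

lemma arc_len_mono:
  assumes "a \<le> a'" "a' \<le> b'" "b' \<le> b"
  shows "arc_len g a' b' \<le> arc_len g a b"
proof (rule arc_len_le)
  fix xs assume xs: "xs \<noteq> []" "hd xs = a'" "last xs = b'" "sorted xs"
  have "set xs \<subseteq> {a'..b'}"
    using sorted_subset_hd_last[OF xs(4,1)] xs by simp
  then have "sorted (a # xs @ [b])"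
    using xs(4) assms by (auto simp: sorted_append)
  then have "polygon_length (map g (a # xs @ [b])) \<le> arc_len g a b"
    by (intro polygon_length_le_arc_len) auto
  moreover have "polygon_length (map g xs) \<le> polygon_length (map g (a # xs @ [b]))"
    using xs(1) by (simp add: polygon_length_Cons polygon_length_append polygon_length_nonneg)
  ultimately show "polygon_length (map g xs) \<le> arc_len g a b"
    by simp
qed (use assms in simp)

lemma arc_len_triangle:
  assumes "a \<le> c" "c \<le> b"
  shows "arc_len g a b \<le> arc_len g a c + arc_len g c b"
proof (rule arc_len_le)
  fix xs assume xs: "xs \<noteq> []" "hd xs = a" "last xs = b" "sorted xs"
  define A where "A = takeWhile (\<lambda>y. y \<le> c) xs @ [c]"
  define C where "C = c # dropWhile (\<lambda>y. y \<le> c) xs"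
  have "polygon_length (map g xs) \<le> polygon_length (map g A) + polygon_length (map g C)"
    unfolding A_def C_def by (rule polygon_length_map_split)
  moreover have "polygon_length (map g A) \<le> arc_len g a c"
  proof (rule polygon_length_le_arc_len)
    show "hd A = a"
      using xs(1,2) assms by (cases xs) (auto simp: A_def)
    show "sorted A"
      unfolding A_def using xs(4) by (rule sorted_takeWhile_le_snoc)
  qed (simp_all add: A_def)
  moreover have "polygon_length (map g C) \<le> arc_len g c b"
  proof (rule polygon_length_le_arc_len)
    show "last C = b"
    proof (cases "dropWhile (\<lambda>y. y \<le> c) xs = []")
      case True
      then have "b \<le> c"
        using xs(1,3) by (metis dropWhile_eq_Nil_conv last_in_set)
      then show ?thesis
        using True assms by (simp add: C_def)
    next
      case False
      then have "last (dropWhile (\<lambda>y. y \<le> c) xs) = last xs"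
        by (metis last_appendR takeWhile_dropWhile_id)
      then show ?thesis
        using False xs(3) by (simp add: C_def del: dropWhile_eq_Nil_conv)
    qed
    show "sorted C"
      unfolding C_def using xs(4) by (rule sorted_Cons_dropWhile_le)
  qed (simp_all add: C_def)
  ultimately show "polygon_length (map g xs) \<le> arc_len g a c + arc_len g c b"
    by simp
qed (use assms in simp)

lemma arc_len_le_chord:
  assumes "\<theta> < 1"
    and turning: "\<forall>xs. sorted_wrt (<) xs \<and> set xs \<subseteq> {lo..hi} \<longrightarrow> polygon_turning (map g xs) \<le> \<theta>"
    and "lo \<le> x" "x \<le> y" "y \<le> hi"
  shows "(1 - \<theta>) * arc_len g x y \<le> dist (g x) (g y)"
proof -
  have "arc_len g x y \<le> dist (g x) (g y) / (1 - \<theta>)"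
  proof (rule arc_len_le)
    fix xs assume xs: "xs \<noteq> []" "hd xs = x" "last xs = y" "sorted xs"
    define ys where "ys = remdups_adj xs"
    have "set ys \<subseteq> {lo..hi}"
      using sorted_subset_hd_last[OF xs(4,1)] xs assms by (auto simp: ys_def)
    then have "polygon_turning (map g ys) \<le> \<theta>"
      using turning sorted_wrt_less_remdups_adj[OF xs(4)] by (auto simp: ys_def)
    then have "(1 - \<theta>) * polygon_length (map g ys) \<le> dist (hd (map g ys)) (last (map g ys))"
      using xs(1) by (intro polygon_length_le_chord) (auto simp: ys_def)
    moreover have "hd (map g ys) = g x" "last (map g ys) = g y"
      using xs by (simp_all add: ys_def hd_map last_map)
    ultimately show "polygon_length (map g xs) \<le> dist (g x) (g y) / (1 - \<theta>)"
      using \<open>\<theta> < 1\<close> by (simp add: ys_def polygon_length_map_remdups_adj field_simps)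
  qed (use assms in simp)
  then show ?thesis
    using \<open>\<theta> < 1\<close> by (simp add: field_simps)
qed

end

text \<open>Meant for a supremum over a subset \<open>S\<close> of \<open>K\<close> that is not closed (the off-diagonal pairs):
  upper semicontinuity is only needed along \<open>S\<close>, and on \<open>K - S\<close> only values below the supremum.\<close>
lemma upper_semicontinuous_attains_SUP:
  fixes f :: "'a::topological_space \<Rightarrow> 'b::{complete_linorder, dense_linorder}"
  assumes "compact K" "S \<subseteq> K" "S \<noteq> {}"
    and usc: "\<And>x c. x \<in> K \<Longrightarrow> f x < c \<Longrightarrow> \<exists>U. open U \<and> x \<in> U \<and> (\<forall>y\<in>S \<inter> U. f y \<le> c)"
    and le_SUP: "\<And>x. x \<in> K \<Longrightarrow> f x \<le> (SUP y\<in>S. f y)"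
  shows "\<exists>x\<in>K. f x = (SUP y\<in>S. f y)"
proof (rule ccontr)
  define M where "M = (SUP y\<in>S. f y)"
  assume "\<not> (\<exists>x\<in>K. f x = (SUP y\<in>S. f y))"
  then have "f x < M" if "x \<in> K" for x
    using le_SUP[OF that] that by (auto simp: M_def order.order_iff_strict)
  then have "\<exists>c U. c < M \<and> open U \<and> x \<in> U \<and> (\<forall>y\<in>S \<inter> U. f y \<le> c)" if "x \<in> K" for x
    using usc[OF that] dense[of "f x" M] that by metis
  then obtain c U where cU: "\<And>x. x \<in> K \<Longrightarrow> c x < M \<and> open (U x) \<and> x \<in> U x \<and> (\<forall>y\<in>S \<inter> U x. f y \<le> c x)"
    by metis
  obtain K' where K': "K' \<subseteq> K" "finite K'" "K \<subseteq> (\<Union>x\<in>K'. U x)"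
    using compactE_image[OF \<open>compact K\<close>, of K U] cU by blast
  then have "K' \<noteq> {}"
    using assms(2,3) by auto
  have "f y \<le> Max (c ` K')" if "y \<in> S" for y
  proof -
    obtain x where "x \<in> K'" "y \<in> U x"
      using K'(3) \<open>y \<in> S\<close> assms(2) by blast
    then have "f y \<le> c x"
      using cU[of x] K'(1) \<open>y \<in> S\<close> by blast
    also have "\<dots> \<le> Max (c ` K')"
      using \<open>x \<in> K'\<close> K'(2) by simp
    finally show ?thesis .
  qed
  then have "M \<le> Max (c ` K')"
    unfolding M_def by (rule SUP_least)
  moreover have "Max (c ` K') < M"
    using K' \<open>K' \<noteq> {}\<close> cU by (subst Max_less_iff) auto
  ultimately show False
    by simp
qed

lemma ereal_inverse_le_if_inverse_add_le:
  fixes k :: real and D :: ereal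
  assumes "0 \<le> k" and le: "\<And>\<eta>. 0 < \<eta> \<Longrightarrow> ereal (1 / (k + \<eta>)) \<le> D"
  shows "(if k = 0 then \<infinity> else ereal (1 / k)) \<le> D"
proof (cases "k = 0")
  case True
  have "D = \<infinity>"
  proof (rule ereal_top)
    fix B :: real
    have "ereal B \<le> ereal (1 / (k + 1 / (\<bar>B\<bar> + 1)))"
      using True by simp
    also have "\<dots> \<le> D"
      by (rule le) (simp add: add_pos_nonneg)
    finally show "ereal B \<le> D" .
  qed
  then show ?thesis
    by simp
next
  case False
  have "w \<le> D" if w: "w < ereal (1 / k)" for w
  proof (cases w)
    case (real r)
    show ?thesis
    proof (cases "r \<le> 0")
      case True
      have "0 \<le> 1 / (k + 1)"
        using \<open>0 \<le> k\<close> by simp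
      then have "r \<le> 1 / (k + 1)"
        using True by linarith
      then have "w \<le> ereal (1 / (k + 1))"
        using real by simp
      also have "\<dots> \<le> D"
        by (rule le) simp
      finally show ?thesis .
    next
      case False
      then have "0 < 1 / r - k"
        using w real \<open>0 \<le> k\<close> \<open>k \<noteq> 0\<close> by (simp add: field_simps)
      moreover have "r = 1 / (k + (1 / r - k))"
        using False by simp
      ultimately show ?thesis
        using le real by metis
    qed
  qed (use w in auto)
  then show ?thesis
    using False by (simp add: dense_le)
qed

section \<open>Local straightness and one-sided tangents\<close>

lemma Cauchy_at_right_imp_convergent:
  fixes u :: "real \<Rightarrow> 'a::complete_space"
  assumes Cauchy: "\<And>e. 0 < e \<Longrightarrow> \<exists>h>0. \<forall>t1 t2. s < t1 \<and> t1 < s + h \<and> s < t2 \<and> t2 < s + h \<longrightarrow> dist (u t1) (u t2) < e"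
  shows "\<exists>T. (u \<longlongrightarrow> T) (at_right s)"
proof -
  define a where "a n = u (s + inverse (Suc n))" for n
  have small: "eventually (\<lambda>n. inverse (Suc n) < h) sequentially" if "0 < h" for h
    using LIMSEQ_inverse_real_of_nat that by (rule order_tendstoD)
  have "Cauchy a"
  proof (rule metric_CauchyI)
    fix e :: real assume "0 < e"
    then obtain h where h: "h > 0" "\<forall>t1 t2. s < t1 \<and> t1 < s + h \<and> s < t2 \<and> t2 < s + h \<longrightarrow> dist (u t1) (u t2) < e"
      using Cauchy by blast
    then obtain N where "\<forall>n\<ge>N. inverse (Suc n) < h"
      using small[OF \<open>h > 0\<close>] by (auto simp: eventually_sequentially)
    then have "\<forall>m\<ge>N. \<forall>n\<ge>N. dist (a m) (a n) < e"
      using h(2) by (simp add: a_def)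
    then show "\<exists>N. \<forall>m\<ge>N. \<forall>n\<ge>N. dist (a m) (a n) < e" ..
  qed
  then obtain T where "a \<longlonglongrightarrow> T"
    using Cauchy_convergent_iff convergent_def by blast
  have "(u \<longlongrightarrow> T) (at_right s)"
  proof (rule tendstoI)
    fix e :: real assume "0 < e"
    then obtain h where h: "h > 0" "\<forall>t1 t2. s < t1 \<and> t1 < s + h \<and> s < t2 \<and> t2 < s + h \<longrightarrow> dist (u t1) (u t2) < e / 2"
      using Cauchy[of "e / 2"] by auto
    obtain n where n: "inverse (Suc n) < h" "dist (a n) T < e / 2"
      using eventually_conj[OF small[OF \<open>h > 0\<close>] tendstoD[OF \<open>a \<longlonglongrightarrow> T\<close>, of "e / 2"]] \<open>0 < e\<close>
      by (auto simp: eventually_sequentially)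
    have "dist (u t) T < e" if "t \<in> {s<..<s + h}" for t
    proof -
      have "dist (u t) (a n) < e / 2"
        using h(2) n(1) that by (simp add: a_def)
      then show ?thesis
        using dist_triangle[of "u t" T "a n"] n(2) by simp
    qed
    then show "eventually (\<lambda>t. dist (u t) T < e) (at_right s)"
      using eventually_at_right_real[of s "s + h"] h(1) by (auto elim: eventually_mono)
  qed
  then show ?thesis ..
qed

definition turning_vanishes_at_right :: "(real \<Rightarrow> 'a::euclidean_space) \<Rightarrow> real \<Rightarrow> bool" where
  "turning_vanishes_at_right f s \<longleftrightarrow> (\<forall>e>0. \<exists>h>0. \<forall>xs. sorted_wrt (<) xs \<and> set xs \<subseteq> {s..s + h} \<longrightarrow>
     polygon_turning (map f xs) \<le> e)"

definition turning_vanishes_at_left :: "(real \<Rightarrow> 'a::euclidean_space) \<Rightarrow> real \<Rightarrow> bool" where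
  "turning_vanishes_at_left f s \<longleftrightarrow> (\<forall>e>0. \<exists>h>0. \<forall>xs. sorted_wrt (<) xs \<and> set xs \<subseteq> {s - h..s} \<longrightarrow>
     polygon_turning (map f xs) \<le> e)"

lemma polygon_turning_reflect:
  "polygon_turning (map (\<lambda>t. f (- t)) xs) = polygon_turning (map f (rev (map uminus xs)))"
proof -
  have "map f (rev (map uminus xs)) = rev (map (\<lambda>t. f (- t)) xs)"
    by (simp add: rev_map comp_def)
  then show ?thesis
    by (simp add: polygon_turning_rev)
qed

lemma sorted_wrt_less_rev_uminus: "sorted_wrt (<) (xs :: real list) \<Longrightarrow> sorted_wrt (<) (rev (map uminus xs))"
  by (simp add: sorted_wrt_rev sorted_wrt_map)

lemma turning_vanishes_at_left_if_reflect:
  assumes "turning_vanishes_at_right (\<lambda>t. f (- t)) (- s)"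
  shows "turning_vanishes_at_left f s"
  unfolding turning_vanishes_at_left_def
proof (intro allI impI)
  fix e :: real assume "0 < e"
  then obtain h where h: "h > 0"
    "\<forall>xs. sorted_wrt (<) xs \<and> set xs \<subseteq> {- s..- s + h} \<longrightarrow> polygon_turning (map (\<lambda>t. f (- t)) xs) \<le> e"
    using assms unfolding turning_vanishes_at_right_def by blast
  have "polygon_turning (map f xs) \<le> e" if "sorted_wrt (<) xs" "set xs \<subseteq> {s - h..s}" for xs
  proof -
    have "set (rev (map uminus xs)) \<subseteq> {- s..- s + h}"
      using that(2) by auto
    then have "polygon_turning (map (\<lambda>t. f (- t)) (rev (map uminus xs))) \<le> e"
      using h(2) sorted_wrt_less_rev_uminus[OF that(1)] by blast
    then show ?thesis
      by (simp add: polygon_turning_reflect comp_def flip: rev_map polygon_turning_rev[of "map f xs"])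
  qed
  then show "\<exists>h>0. \<forall>xs. sorted_wrt (<) xs \<and> set xs \<subseteq> {s - h..s} \<longrightarrow> polygon_turning (map f xs) \<le> e"
    using h(1) by blast
qed

text \<open>A vertex at \<open>s\<close> can be moved slightly to the right: the angle at the next vertex depends
  continuously on it.\<close>
lemma polygon_turning_avoiding_start:
  fixes f :: "real \<Rightarrow> 'a::euclidean_space"
  assumes "isCont f s" "inj_on f {s..s + h}" "0 \<le> e"
    and xs: "sorted_wrt (<) xs" "set xs \<subseteq> {s..s + h}" "e < polygon_turning (map f xs)"
  shows "\<exists>ys. sorted_wrt (<) ys \<and> set ys \<subseteq> {s<..s + h} \<and> e < polygon_turning (map f ys)"
proof (cases "s \<in> set xs")
  case False
  then have "set xs \<subseteq> {s<..s + h}"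
    using xs(2) by (fastforce simp: subset_eq less_le)
  then show ?thesis
    using xs by blast
next
  case True
  obtain x0 x1 x2 r where xr: "xs = x0 # x1 # x2 # r"
    using xs(3) \<open>0 \<le> e\<close> by (cases xs rule: polygon_turning.cases) auto
  have "x0 = s"
    using True xs(1,2) xr by auto
  then have "sorted_wrt (<) (x1 # x2 # r)" "set (x1 # x2 # r) \<subseteq> {s<..s + h}" "s < x1"
    using xs(1,2) xr by auto
  then have "f x1 - f s \<noteq> 0"
    using inj_onD[OF assms(2), of x1 s] by auto
  define \<phi> where "\<phi> t = vec_angle (f x1 - f t) (f x2 - f x1)" for t
  define R where "R = polygon_turning (map f (x1 # x2 # r))"
  have "isCont \<phi> s"
    unfolding \<phi>_def using assms(1) \<open>f x1 - f s \<noteq> 0\<close>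
    by (intro continuous_at_compose[unfolded o_def, OF _ isCont_vec_angle_left]) auto
  then have "(\<phi> \<longlongrightarrow> \<phi> s) (at_right s)"
    unfolding isCont_def by (rule tendsto_within_subset) simp
  then have "((\<lambda>t. \<phi> t + R) \<longlongrightarrow> \<phi> s + R) (at_right s)"
    by (intro tendsto_add tendsto_const)
  moreover have "e < \<phi> s + R"
    using xs(3) xr \<open>x0 = s\<close> by (simp add: \<phi>_def R_def)
  ultimately have "eventually (\<lambda>t. e < \<phi> t + R) (at_right s)"
    by (rule order_tendstoD(1))
  with eventually_at_right_real[OF \<open>s < x1\<close>]
  have "eventually (\<lambda>t. t \<in> {s<..<x1} \<and> e < \<phi> t + R) (at_right s)"
    by (rule eventually_conj)
  then obtain t where t: "s < t" "t < x1" "e < \<phi> t + R"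
    using eventually_happens'[OF trivial_limit_at_right_real] by auto
  have "sorted_wrt (<) (t # x1 # x2 # r)"
    using \<open>sorted_wrt (<) (x1 # x2 # r)\<close> \<open>t < x1\<close> by auto
  moreover have "set (t # x1 # x2 # r) \<subseteq> {s<..s + h}"
    using \<open>set (x1 # x2 # r) \<subseteq> {s<..s + h}\<close> t by auto
  moreover have "e < polygon_turning (map f (t # x1 # x2 # r))"
    using t(3) by (simp add: \<phi>_def R_def)
  ultimately show ?thesis
    by blast
qed

text \<open>Polygons placed ever closer to \<open>s\<close>, each to the left of the previous ones, add up their turning.\<close>
lemma polygon_turning_stacking:
  fixes f :: "real \<Rightarrow> 'a::euclidean_space"
  assumes "0 < H"
    and bad: "\<And>h. 0 < h \<Longrightarrow> h \<le> H \<Longrightarrow>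
      \<exists>xs. sorted_wrt (<) xs \<and> set xs \<subseteq> {s<..s + h} \<and> e < polygon_turning (map f xs)"
  shows "\<exists>xs. xs \<noteq> [] \<and> sorted_wrt (<) xs \<and> set xs \<subseteq> {s<..s + H} \<and> real k * e \<le> polygon_turning (map f xs)"
proof (induction k)
  case 0
  show ?case
    using \<open>0 < H\<close> by (intro exI[of _ "[s + H]"]) auto
next
  case (Suc k)
  then obtain P where P: "P \<noteq> []" "sorted_wrt (<) P" "set P \<subseteq> {s<..s + H}"
    "real k * e \<le> polygon_turning (map f P)" by blast
  define h where "h = min ((hd P - s) / 2) H"
  have "hd P \<in> {s<..s + H}"
    using P(1,3) hd_in_set by blast
  moreover have "h \<le> (hd P - s) / 2"
    unfolding h_def by (rule min.cobounded1)
  ultimately have "s + h < hd P"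
    by simp
  have "0 < h" "h \<le> H"
    using \<open>0 < H\<close> \<open>hd P \<in> {s<..s + H}\<close> by (auto simp: h_def)
  then obtain Q where Q: "sorted_wrt (<) Q" "set Q \<subseteq> {s<..s + h}" "e < polygon_turning (map f Q)"
    using bad by blast
  have "\<forall>x\<in>set Q. \<forall>y\<in>set P. x < y"
  proof (intro ballI)
    fix x y assume "x \<in> set Q" "y \<in> set P"
    have "x \<le> s + h"
      using Q(2) \<open>x \<in> set Q\<close> by auto
    moreover have "hd P \<le> y"
      using P(2) \<open>y \<in> set P\<close> by (cases P) auto
    ultimately show "x < y"
      using \<open>s + h < hd P\<close> by linarith
  qed
  then have "sorted_wrt (<) (Q @ P)"
    using P(2) Q(1) by (simp add: sorted_wrt_append)
  moreover have "set (Q @ P) \<subseteq> {s<..s + H}"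
    using P(3) Q(2) \<open>h \<le> H\<close> by auto
  moreover have "real (Suc k) * e \<le> polygon_turning (map f (Q @ P))"
    using polygon_turning_append_ge[of "map f Q" "map f P"] P(4) Q(3) by (simp add: algebra_simps)
  ultimately show ?case
    using P(1) by blast
qed

lemma turning_vanishes_at_right_if_bounded:
  fixes f :: "real \<Rightarrow> 'a::euclidean_space"
  assumes "isCont f s" "0 < H" "inj_on f {s..s + H}"
    and bounded: "\<forall>xs. sorted_wrt (<) xs \<and> set xs \<subseteq> {s..s + H} \<longrightarrow> polygon_turning (map f xs) \<le> B"
  shows "turning_vanishes_at_right f s"
proof (rule ccontr)
  assume "\<not> turning_vanishes_at_right f s"
  then obtain e where "0 < e" and large:
    "\<And>h. 0 < h \<Longrightarrow> \<exists>xs. sorted_wrt (<) xs \<and> set xs \<subseteq> {s..s + h} \<and> e < polygon_turning (map f xs)"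
    unfolding turning_vanishes_at_right_def by (auto simp: not_le)
  have "\<exists>xs. sorted_wrt (<) xs \<and> set xs \<subseteq> {s<..s + h} \<and> e < polygon_turning (map f xs)"
    if "0 < h" "h \<le> H" for h
  proof -
    have "inj_on f {s..s + h}"
      using assms(3) that by (auto intro: inj_on_subset)
    then show ?thesis
      using large[OF \<open>0 < h\<close>] polygon_turning_avoiding_start[OF assms(1)] \<open>0 < e\<close> by force
  qed
  moreover obtain k :: nat where "B / e < real k"
    using reals_Archimedean2 by blast
  ultimately obtain xs where "sorted_wrt (<) xs" "set xs \<subseteq> {s<..s + H}" "real k * e \<le> polygon_turning (map f xs)"
    using polygon_turning_stacking[OF \<open>0 < H\<close>] by blast
  moreover have "B < real k * e"
    using \<open>B / e < real k\<close> \<open>0 < e\<close> by (simp add: field_simps)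
  ultimately show False
    using bounded by force
qed

text \<open>Once the turning vanishes at \<open>s\<close>, the directions of the chords from \<open>f s\<close> form a Cauchy net.\<close>
lemma right_tangent_exists:
  fixes f :: "real \<Rightarrow> 'a::euclidean_space"
  assumes "turning_vanishes_at_right f s" "0 < H" "inj_on f {s..s + H}"
  shows "\<exists>T. norm T = 1 \<and> ((\<lambda>t. sgn (f t - f s)) \<longlongrightarrow> T) (at_right s)"
proof -
  define u where "u t = sgn (f t - f s)" for t
  have nonzero: "f t - f s \<noteq> 0" if "s < t" "t \<le> s + H" for t
    using inj_onD[OF assms(3), of t s] that by auto
  have "\<exists>h>0. \<forall>t1 t2. s < t1 \<and> t1 < s + h \<and> s < t2 \<and> t2 < s + h \<longrightarrow> dist (u t1) (u t2) < e"
    if "0 < e" for e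
  proof -
    obtain h0 where h0: "h0 > 0"
      "\<forall>xs. sorted_wrt (<) xs \<and> set xs \<subseteq> {s..s + h0} \<longrightarrow> polygon_turning (map f xs) \<le> e / 4"
      using assms(1) \<open>0 < e\<close> unfolding turning_vanishes_at_right_def by (meson divide_pos_pos zero_less_numeral)
    have close: "dist (u t1) (u t2) < e" if "s < t1" "t1 < t2" "t2 < s + min h0 H" for t1 t2
    proof -
      define e1 where "e1 = f t1 - f s"
      define e2 where "e2 = f t2 - f t1"
      have "t2 \<le> s + h0"
        using that by (simp add: min_def split: if_splits)
      then have "vec_angle e1 e2 \<le> e / 4"
        using h0(2)[rule_format, of "[s, t1, t2]"] that h0(1) by (simp add: e1_def e2_def)
      moreover have "norm (sgn (e1 + e2) - sgn e1) \<le> 2 * vec_angle e1 e2"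
        using norm_sgn_add_diff_le[of e1 e2] norm_sgn_diff_le_vec_angle[of e2 e1] nonzero[of t1] that
        by (simp add: e1_def vec_angle_commute)
      moreover have "dist (u t1) (u t2) = norm (sgn (e1 + e2) - sgn e1)"
        by (simp add: u_def e1_def e2_def dist_norm norm_minus_commute)
      ultimately show ?thesis
        using \<open>0 < e\<close> by simp
    qed
    have "\<forall>t1 t2. s < t1 \<and> t1 < s + min h0 H \<and> s < t2 \<and> t2 < s + min h0 H \<longrightarrow> dist (u t1) (u t2) < e"
      using close close[THEN dist_commute_lessI] \<open>0 < e\<close> by (metis linorder_neqE_linordered_idom dist_self)
    then show ?thesis
      using h0(1) \<open>0 < H\<close> by (intro exI[of _ "min h0 H"]) auto
  qed
  then obtain T where T: "(u \<longlongrightarrow> T) (at_right s)"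
    using Cauchy_at_right_imp_convergent by blast
  have "eventually (\<lambda>t. norm (u t) = 1) (at_right s)"
    using eventually_at_right_real[of s "s + H"] \<open>0 < H\<close>
    by (auto elim!: eventually_mono simp: u_def norm_sgn nonzero simp del: right_minus_eq)
  then have "((\<lambda>t. norm (u t)) \<longlongrightarrow> 1) (at_right s)"
    by (rule tendsto_eventually)
  then have "norm T = 1"
    using tendsto_norm[OF T] by (intro tendsto_unique[OF trivial_limit_at_right_real]) auto
  then show ?thesis
    using T unfolding u_def by blast
qed

section \<open>Closed curves of finite total curvature\<close>

locale ftc_closed_curve =
  fixes g :: "real \<Rightarrow> 'a::euclidean_space"
  assumes simple_closed: "simple_closed_curve g"
    and finite_curvature: "finite_total_curvature g"
begin

lemma isCont_g: "isCont g x"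
  using simple_closed by (simp add: simple_closed_curve_def continuous_on_eq_continuous_at)

lemma g_add_of_int: "g (x + of_int k) = g x"
proof -
  have g_add_of_nat: "g (y + of_nat n) = g y" for y n
  proof (induction n)
    case (Suc n)
    have "g (y + of_nat (Suc n)) = g ((y + of_nat n) + 1)"
      by (simp add: add_ac)
    then show ?case
      using Suc simple_closed by (simp add: simple_closed_curve_def)
  qed simp
  show ?thesis
  proof (cases "0 \<le> k")
    case True
    then show ?thesis
      using g_add_of_nat[of x "nat k"] by simp
  next
    case False
    then show ?thesis
      using g_add_of_nat[of "x + of_int k" "nat (- k)"] by simp
  qed
qed

lemma g_diff_of_int: "g (x - of_int k) = g x"
  using g_add_of_int[of x "- k"] by simp

lemma g_frac: "g (frac x) = g x"
  unfolding frac_def by (rule g_diff_of_int)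

lemma param_g: "param g (g x) = frac x"
  unfolding param_def
proof (rule the_equality)
  show "frac x \<in> {0..<1} \<and> g (frac x) = g x"
    by (simp add: g_frac frac_lt_1)
next
  fix s assume "s \<in> {0..<1} \<and> g s = g x"
  moreover have "inj_on g {0..<1}"
    using simple_closed by (simp add: simple_closed_curve_def)
  ultimately show "s = frac x"
    using inj_onD[of g "{0..<1}" s "frac x"] g_frac[of x] frac_lt_1[of x] by auto
qed

lemma param_g_of_01: "s \<in> {0..<1} \<Longrightarrow> param g (g s) = s"
  by (simp add: param_g frac_eq)

lemma g_neq:
  assumes "x < y" "y < x + 1"
  shows "g x \<noteq> g y"
proof
  assume "g x = g y"
  then have "frac x = frac y"
    using param_g by metis
  then have "y - x = of_int (\<lfloor>y\<rfloor> - \<lfloor>x\<rfloor>)"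
    by (simp add: frac_def)
  then have "(0::real) < of_int (\<lfloor>y\<rfloor> - \<lfloor>x\<rfloor>)" "of_int (\<lfloor>y\<rfloor> - \<lfloor>x\<rfloor>) < (1::real)"
    using assms by linarith+
  then show False
    by simp
qed

lemma g_neq_abs: "x \<noteq> y \<Longrightarrow> \<bar>x - y\<bar> < 1 \<Longrightarrow> g x \<noteq> g y"
  using g_neq[of x y] g_neq[of y x] by (cases "x < y") auto

lemma inj_on_g: "b - a < 1 \<Longrightarrow> inj_on g {a..b}"
proof (rule inj_onI, rule ccontr)
  fix x y assume "b - a < 1" "x \<in> {a..b}" "y \<in> {a..b}" "g x = g y" "x \<noteq> y"
  then show False
    using g_neq_abs[of x y] by (auto simp: abs_less_iff)
qed

lemma inj_on_g_reflected: "b - a < 1 \<Longrightarrow> inj_on (\<lambda>t. g (- t)) {a..b}"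
proof (rule inj_onI, rule ccontr)
  fix x y assume "b - a < 1" "x \<in> {a..b}" "y \<in> {a..b}" "g (- x) = g (- y)" "x \<noteq> y"
  then show False
    using g_neq_abs[of "- x" "- y"] by (auto simp: abs_less_iff)
qed

lemma curve_set_eq_range: "curve_set g = range g"
  unfolding curve_set_def using g_frac frac_lt_1 by (force intro: image_eqI[of _ _ "frac _"])

lemma compact_curve_set: "compact (curve_set g)"
proof -
  have "curve_set g \<subseteq> g ` {0..1}"
    by (auto simp: curve_set_def)
  moreover have "g ` {0..1} \<subseteq> curve_set g"
    by (auto simp: curve_set_eq_range)
  ultimately have "curve_set g = g ` {0..1}"
    by blast
  then show ?thesis
    using isCont_g by (auto intro!: compact_continuous_image continuous_at_imp_continuous_on)
qed

lemma diameter_bounded: "\<exists>D. \<forall>x y. dist (g x) (g y) \<le> D"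
proof -
  obtain D where "\<forall>p\<in>curve_set g. \<forall>q\<in>curve_set g. dist p q \<le> D"
    using compact_imp_bounded[OF compact_curve_set] by (meson bounded_two_points)
  then show ?thesis
    by (auto simp: curve_set_eq_range)
qed

lemma map_g_shift: "map g (map (\<lambda>x. x + of_int k) xs) = map g xs"
  by (simp add: g_add_of_int)

lemma turning_bounded: "\<exists>B. \<forall>k::int. \<forall>xs. sorted_wrt (<) xs \<and> set xs \<subseteq> {of_int k..of_int k + 1} \<longrightarrow>
    polygon_turning (map g xs) \<le> B"
proof -
  obtain B where B: "\<forall>(n::nat) (t::nat \<Rightarrow> real). 0 \<le> t 0 \<and> t n \<le> 1 \<and> (\<forall>i<n. t i < t (Suc i)) \<longrightarrow>
     (\<Sum>i\<in>{1..<n}. vec_angle (g (t i) - g (t (i - 1))) (g (t (Suc i)) - g (t i))) \<le> B"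
    using finite_curvature unfolding finite_total_curvature_def by blast
  have unit: "polygon_turning (map g xs) \<le> B" if "sorted_wrt (<) xs" "set xs \<subseteq> {0..1}" "xs \<noteq> []" for xs
  proof -
    define n where "n = length xs - 1"
    have "xs ! 0 \<in> set xs" "xs ! n \<in> set xs"
      using that(3) by (auto simp: n_def)
    then have "0 \<le> xs ! 0" "xs ! n \<le> 1"
      using that(2) by auto
    moreover have "\<forall>i<n. xs ! i < xs ! Suc i"
      using that(1) by (auto simp: n_def sorted_wrt_iff_nth_less)
    ultimately have "(\<Sum>i\<in>{1..<n}. vec_angle (g (xs ! i) - g (xs ! (i - 1))) (g (xs ! Suc i) - g (xs ! i))) \<le> B"
      using B[rule_format, of "\<lambda>i. xs ! i" n] by blast
    moreover have "polygon_turning (map g xs) =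
        (\<Sum>i\<in>{1..<n}. vec_angle (g (xs ! i) - g (xs ! (i - 1))) (g (xs ! Suc i) - g (xs ! i)))"
      unfolding polygon_turning_eq_sum by (intro sum.cong) (auto simp: n_def)
    ultimately show ?thesis
      by simp
  qed
  have "0 \<le> B"
    using B[rule_format, where n=0 and t="\<lambda>_. 0"] by simp
  have "polygon_turning (map g xs) \<le> B"
    if "sorted_wrt (<) xs" "set xs \<subseteq> {of_int k..of_int k + 1}" for k xs
  proof (cases "xs = []")
    case False
    have "polygon_turning (map g (map (\<lambda>x. x + of_int (- k)) xs)) \<le> B"
      using that False by (intro unit) (auto simp: sorted_wrt_map)
    then show ?thesis
      by (simp only: map_g_shift)
  qed (use \<open>0 \<le> B\<close> in simp)
  then show ?thesis
    by blast
qed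

lemma polygon_length_bounded: "\<exists>M. \<forall>k::int. \<forall>xs. sorted xs \<and> set xs \<subseteq> {of_int k..of_int k + 1} \<longrightarrow>
    polygon_length (map g xs) \<le> M"
proof -
  obtain D where D: "\<And>x y. dist (g x) (g y) \<le> D"
    using diameter_bounded by blast
  obtain B where B: "\<forall>k::int. \<forall>xs. sorted_wrt (<) xs \<and> set xs \<subseteq> {of_int k..of_int k + 1} \<longrightarrow>
    polygon_turning (map g xs) \<le> B"
    using turning_bounded by blast
  have "0 \<le> D"
    using D[of 0 0] by simp
  have "polygon_length (map g xs) \<le> 2 * D * (2 * B + 1)"
    if "sorted xs" "set xs \<subseteq> {of_int k..of_int k + 1}" for k xs
  proof -
    have "polygon_length (map g xs) = polygon_length (map g (remdups_adj xs))"
      by (simp add: polygon_length_map_remdups_adj)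
    also have "\<dots> \<le> 2 * D * (2 * polygon_turning (map g (remdups_adj xs)) + 1)"
      using D \<open>0 \<le> D\<close> by (intro polygon_length_le_diameter_turning) auto
    also have "\<dots> \<le> 2 * D * (2 * B + 1)"
      using B that sorted_wrt_less_remdups_adj[OF that(1)] \<open>0 \<le> D\<close> by (intro mult_left_mono) auto
    finally show ?thesis .
  qed
  then show ?thesis
    by blast
qed

sublocale locally_rectifiable g
proof
  fix a b :: real
  obtain M where M: "\<forall>k::int. \<forall>xs. sorted xs \<and> set xs \<subseteq> {of_int k..of_int k + 1} \<longrightarrow>
    polygon_length (map g xs) \<le> M"
    using polygon_length_bounded by blast
  have long: "polygon_length (map g xs) \<le> of_nat (Suc n) * M"
    if "sorted xs" "set xs \<subseteq> {of_int k..of_int k + of_nat (Suc n)}" for n k xs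
    using that
  proof (induction n arbitrary: xs k)
    case 0
    then show ?case
      using M by simp
  next
    case (Suc n)
    define c :: real where "c = of_int (k + 1)"
    have "sorted (takeWhile (\<lambda>y. y \<le> c) xs @ [c])"
      using Suc.prems(1) by (rule sorted_takeWhile_le_snoc)
    moreover have "set (takeWhile (\<lambda>y. y \<le> c) xs @ [c]) \<subseteq> {of_int k..of_int k + 1}"
      using Suc.prems(2) by (auto simp: c_def subset_eq dest: set_takeWhileD)
    ultimately have "polygon_length (map g (takeWhile (\<lambda>y. y \<le> c) xs @ [c])) \<le> M"
      using M by blast
    have "sorted (c # dropWhile (\<lambda>y. y \<le> c) xs)"
      using Suc.prems(1) by (rule sorted_Cons_dropWhile_le)
    moreover have "set (dropWhile (\<lambda>y. y \<le> c) xs) \<subseteq> set xs"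
      by (auto dest: set_dropWhileD)
    with calculation have "set (c # dropWhile (\<lambda>y. y \<le> c) xs) \<subseteq> {of_int (k + 1)..of_int (k + 1) + of_nat (Suc n)}"
      using Suc.prems(2) by (auto simp: c_def)
    ultimately have "polygon_length (map g (c # dropWhile (\<lambda>y. y \<le> c) xs)) \<le> of_nat (Suc n) * M"
      by (rule Suc.IH)
    with \<open>polygon_length (map g (takeWhile (\<lambda>y. y \<le> c) xs @ [c])) \<le> M\<close> show ?case
      using polygon_length_map_split[of g xs c] by (simp add: algebra_simps)
  qed
  have "of_int \<lfloor>a\<rfloor> \<le> a" "b \<le> of_int \<lfloor>a\<rfloor> + of_nat (Suc (nat \<lceil>b - a\<rceil>))"
    using real_nat_ceiling_ge[of "b - a"] by linarith+
  show "bdd_above (inscribed_lengths g a b)"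
  proof (rule bdd_aboveI)
    fix l assume "l \<in> inscribed_lengths g a b"
    then obtain xs where xs: "l = polygon_length (map g xs)" "xs \<noteq> []" "hd xs = a" "last xs = b" "sorted xs"
      by (auto simp: inscribed_lengths_def)
    have "set xs \<subseteq> {a..b}"
      using sorted_subset_hd_last[OF xs(5,2)] xs(3,4) by simp
    also have "\<dots> \<subseteq> {of_int \<lfloor>a\<rfloor>..of_int \<lfloor>a\<rfloor> + of_nat (Suc (nat \<lceil>b - a\<rceil>))}"
      using \<open>b \<le> of_int \<lfloor>a\<rfloor> + of_nat (Suc (nat \<lceil>b - a\<rceil>))\<close> by auto
    finally have "set xs \<subseteq> {of_int \<lfloor>a\<rfloor>..of_int \<lfloor>a\<rfloor> + of_nat (Suc (nat \<lceil>b - a\<rceil>))}" .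
    then show "l \<le> of_nat (Suc (nat \<lceil>b - a\<rceil>)) * M"
      using long xs(1,5) by blast
  qed
qed

lemma arc_len_shift: "arc_len g (a + of_int k) (b + of_int k) = arc_len g a b"
proof -
  have shift: "inscribed_lengths g a b \<subseteq> inscribed_lengths g (a + of_int j) (b + of_int j)" for a b j
  proof
    fix l assume "l \<in> inscribed_lengths g a b"
    then obtain xs where xs: "l = polygon_length (map g xs)" "xs \<noteq> []" "hd xs = a" "last xs = b" "sorted xs"
      by (auto simp: inscribed_lengths_def)
    define ys where "ys = map (\<lambda>x. x + of_int j) xs"
    have "l = polygon_length (map g ys)"
      by (simp only: xs(1) ys_def map_g_shift)
    moreover have "ys \<noteq> []" "hd ys = a + of_int j" "last ys = b + of_int j" "sorted ys"
      using xs by (auto simp: ys_def hd_map last_map sorted_map)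
    ultimately show "l \<in> inscribed_lengths g (a + of_int j) (b + of_int j)"
      unfolding inscribed_lengths_def by blast
  qed
  have "inscribed_lengths g (a + of_int k) (b + of_int k) \<subseteq> inscribed_lengths g a b"
    using shift[of "a + of_int k" "b + of_int k" "- k"] by simp
  then show ?thesis
    using shift[of a b k] by (simp add: arc_len_eq_Sup_inscribed_lengths)
qed

lemma Len_g_g:
  assumes "\<sigma> \<le> \<tau>" "\<tau> \<le> \<sigma> + 1"
  shows "Len g (g \<sigma>) (g \<tau>) = min (arc_len g \<sigma> \<tau>) (arc_len g \<tau> (\<sigma> + 1))"
proof -
  define k where "k = \<lfloor>\<sigma>\<rfloor>"
  define s where "s = frac \<sigma>"
  define t where "t = frac \<tau>"
  have s: "s = \<sigma> - of_int k"
    by (simp add: s_def k_def frac_def)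
  have sh: "arc_len g (a - of_int j) (b - of_int j) = arc_len g a b" for a b j
    using arc_len_shift[of "a - of_int j" j "b - of_int j"] by simp
  have "k \<le> \<lfloor>\<tau>\<rfloor>" "\<lfloor>\<tau>\<rfloor> \<le> k + 1"
    using assms by (auto simp: k_def floor_mono) linarith
  then consider "\<lfloor>\<tau>\<rfloor> = k" | "\<lfloor>\<tau>\<rfloor> = k + 1" "t < s" | "\<lfloor>\<tau>\<rfloor> = k + 1" "s \<le> t"
    by linarith
  then show ?thesis
  proof cases
    case 1
    then have t: "t = \<tau> - of_int k"
      by (simp add: t_def frac_def)
    have "s \<le> t"
      using assms unfolding s t by simp
    moreover have "arc_len g s t = arc_len g \<sigma> \<tau>"
      unfolding s t by (rule sh)
    moreover have "arc_len g t (s + 1) = arc_len g \<tau> (\<sigma> + 1)"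
      unfolding s t using sh[of \<tau> k "\<sigma> + 1"] by (simp add: algebra_simps)
    ultimately show ?thesis
      unfolding Len_def param_g Let_def s_def[symmetric] t_def[symmetric] by simp
  next
    case 2
    then have t: "t = \<tau> - of_int (k + 1)"
      by (simp add: t_def frac_def)
    have "arc_len g t s = arc_len g \<tau> (\<sigma> + 1)"
      unfolding s t using sh[of \<tau> "k + 1" "\<sigma> + 1"] by (simp add: algebra_simps)
    moreover have "arc_len g s (t + 1) = arc_len g \<sigma> \<tau>"
      unfolding s t using sh[of \<sigma> k \<tau>] by (simp add: algebra_simps)
    ultimately show ?thesis
      using 2 unfolding Len_def param_g Let_def s_def[symmetric] t_def[symmetric] by (simp add: min.commute)
  next
    case 3
    then have t: "t = \<tau> - of_int (k + 1)"
      by (simp add: t_def frac_def)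
    then have "\<tau> = \<sigma> + 1" "t = s"
      using 3 assms unfolding s by simp_all
    moreover have "arc_len g s s = arc_len g (\<sigma> + 1) (\<sigma> + 1)"
      unfolding s using sh[of "\<sigma> + 1" "k + 1" "\<sigma> + 1"] by (simp add: algebra_simps)
    moreover have "arc_len g s (s + 1) = arc_len g \<sigma> (\<sigma> + 1)"
      unfolding s using sh[of \<sigma> k "\<sigma> + 1"] by (simp add: algebra_simps)
    ultimately show ?thesis
      unfolding Len_def param_g Let_def s_def[symmetric] t_def[symmetric] by (simp add: min.commute)
  qed
qed

lemma Len_commute: "Len g p q = Len g q p"
  unfolding Len_def Let_def by (auto simp: min.commute)

lemma turning_vanishes_at_right_g: "turning_vanishes_at_right g s"
proof -
  obtain B where B: "\<forall>k::int. \<forall>xs. sorted_wrt (<) xs \<and> set xs \<subseteq> {of_int k..of_int k + 1} \<longrightarrow>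
    polygon_turning (map g xs) \<le> B"
    using turning_bounded by blast
  define d where "d = of_int \<lfloor>s\<rfloor> + 1 - s"
  have "0 < d" "d \<le> 1" "s + d = of_int \<lfloor>s\<rfloor> + 1"
    using of_int_floor_le[of s] real_of_int_floor_add_one_gt[of s] by (simp_all add: d_def)
  then have "0 < d / 2" "d / 2 < 1"
    by linarith+
  have "{s..s + d / 2} \<subseteq> {of_int \<lfloor>s\<rfloor>..of_int \<lfloor>s\<rfloor> + 1}"
    using \<open>0 < d\<close> \<open>s + d = of_int \<lfloor>s\<rfloor> + 1\<close> of_int_floor_le[of s] by auto
  then have "\<forall>xs. sorted_wrt (<) xs \<and> set xs \<subseteq> {s..s + d / 2} \<longrightarrow> polygon_turning (map g xs) \<le> B"
    using B by blast
  then show ?thesis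
    using \<open>d / 2 < 1\<close> by (intro turning_vanishes_at_right_if_bounded[OF isCont_g \<open>0 < d / 2\<close>]) (auto intro: inj_on_g)
qed

lemma turning_vanishes_at_right_reflected: "turning_vanishes_at_right (\<lambda>t. g (- t)) (- s)"
proof -
  obtain B where B: "\<forall>k::int. \<forall>xs. sorted_wrt (<) xs \<and> set xs \<subseteq> {of_int k..of_int k + 1} \<longrightarrow>
    polygon_turning (map g xs) \<le> B"
    using turning_bounded by blast
  define k where "k = \<lceil>s\<rceil> - 1"
  define d where "d = s - of_int k"
  have "0 < d" "d \<le> 1" "s - d = of_int k"
    using ceiling_correct[of s] by (simp_all add: d_def k_def)
  then have "0 < d / 2" "d / 2 < 1"
    by linarith+
  have "{s - d / 2..s} \<subseteq> {of_int k..of_int k + 1}"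
    using \<open>0 < d\<close> \<open>d \<le> 1\<close> \<open>s - d = of_int k\<close> by auto
  have "polygon_turning (map (\<lambda>t. g (- t)) xs) \<le> B"
    if "sorted_wrt (<) xs" "set xs \<subseteq> {- s..- s + d / 2}" for xs
  proof -
    have "set (rev (map uminus xs)) \<subseteq> {of_int k..of_int k + 1}"
      using that(2) \<open>{s - d / 2..s} \<subseteq> {of_int k..of_int k + 1}\<close> by force
    then show ?thesis
      using B sorted_wrt_less_rev_uminus[OF that(1)] by (simp add: polygon_turning_reflect)
  qed
  moreover have "isCont (\<lambda>t. g (- t)) (- s)"
    by (rule isCont_o2[where f=uminus]) (auto intro: isCont_g continuous_intros)
  ultimately show ?thesis
    using \<open>0 < d / 2\<close> \<open>d / 2 < 1\<close>
    by (intro turning_vanishes_at_right_if_bounded[where H="d / 2"]) (auto intro: inj_on_g_reflected)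
qed

lemma turning_vanishes_at_left_g: "turning_vanishes_at_left g s"
  using turning_vanishes_at_right_reflected by (rule turning_vanishes_at_left_if_reflect)

definition right_tangent :: "real \<Rightarrow> 'a" where
  "right_tangent s = Lim (at_right s) (\<lambda>t. sgn (g t - g s))"

definition left_tangent :: "real \<Rightarrow> 'a" where
  "left_tangent s = Lim (at_left s) (\<lambda>t. sgn (g s - g t))"

lemma right_tangent:
  shows "norm (right_tangent s) = 1" "((\<lambda>t. sgn (g t - g s)) \<longlongrightarrow> right_tangent s) (at_right s)"
proof -
  obtain T where T: "norm T = 1" "((\<lambda>t. sgn (g t - g s)) \<longlongrightarrow> T) (at_right s)"
    using right_tangent_exists[OF turning_vanishes_at_right_g, of "1/2"] inj_on_g[of "s + 1/2" s] by auto
  moreover have "right_tangent s = T"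
    unfolding right_tangent_def using T(2) by (rule tendsto_Lim[rotated]) simp
  ultimately show "norm (right_tangent s) = 1" "((\<lambda>t. sgn (g t - g s)) \<longlongrightarrow> right_tangent s) (at_right s)"
    by simp_all
qed

lemma left_tangent:
  shows "norm (left_tangent s) = 1" "((\<lambda>t. sgn (g s - g t)) \<longlongrightarrow> left_tangent s) (at_left s)"
proof -
  obtain T where T: "norm T = 1" "((\<lambda>t. sgn (g (- t) - g (- (- s)))) \<longlongrightarrow> T) (at_right (- s))"
    using right_tangent_exists[OF turning_vanishes_at_right_reflected, of "1/2"]
      inj_on_g_reflected[of "- s + 1/2" "- s"] by auto
  then have "((\<lambda>t. sgn (g s - g (- t))) \<longlongrightarrow> - T) (at_right (- s))"
    using tendsto_minus[OF T(2)] by (simp add: sgn_minus[symmetric])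
  then have "((\<lambda>t. sgn (g s - g t)) \<longlongrightarrow> - T) (at_left s)"
    by (simp add: filterlim_at_left_to_right[of _ _ s])
  moreover from this have "left_tangent s = - T"
    unfolding left_tangent_def by (rule tendsto_Lim[rotated]) simp
  ultimately show "norm (left_tangent s) = 1" "((\<lambda>t. sgn (g s - g t)) \<longlongrightarrow> left_tangent s) (at_left s)"
    using T(1) by simp_all
qed

lemma right_tangent_approx:
  assumes "0 < \<eta>"
  shows "\<exists>h>0. \<forall>t. 0 < t \<and> t < h \<longrightarrow> norm (sgn (g (s + t) - g s) - right_tangent s) < \<eta>"
proof -
  obtain b where "s < b" "\<forall>y>s. y < b \<longrightarrow> dist (sgn (g y - g s)) (right_tangent s) < \<eta>"
    using tendstoD[OF right_tangent(2) assms] unfolding eventually_at_right_field by blast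
  then show ?thesis
    by (intro exI[of _ "b - s"]) (auto simp: dist_norm)
qed

lemma left_tangent_approx:
  assumes "0 < \<eta>"
  shows "\<exists>h>0. \<forall>t. 0 < t \<and> t < h \<longrightarrow> norm (sgn (g s - g (s - t)) - left_tangent s) < \<eta>"
proof -
  obtain b where "b < s" "\<forall>y>b. y < s \<longrightarrow> dist (sgn (g s - g y)) (left_tangent s) < \<eta>"
    using tendstoD[OF left_tangent(2) assms] unfolding eventually_at_left_field by blast
  then show ?thesis
    by (intro exI[of _ "s - b"]) (auto simp: dist_norm)
qed

definition cos_half_turn :: "real \<Rightarrow> real" where
  "cos_half_turn s = cos (vec_angle (left_tangent s) (right_tangent s) / 2)"

lemma norm_tangents_add: "norm (left_tangent s + right_tangent s) = 2 * cos_half_turn s"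
  unfolding cos_half_turn_def using left_tangent(1) right_tangent(1)
  by (rule norm_add_unit_eq_cos_half_vec_angle)

lemma delta_g_g:
  assumes "s \<in> {0..<1}"
  shows "delta g (g s) (g s) = (if cos_half_turn s = 0 then \<infinity> else ereal (1 / cos_half_turn s))"
proof -
  have "tangent_plus g (g s) = right_tangent s" "tangent_minus g (g s) = left_tangent s"
    unfolding tangent_plus_def tangent_minus_def right_tangent_def left_tangent_def param_g_of_01[OF assms]
    by (simp_all add: sgn_div_norm)
  then show ?thesis
    unfolding delta_def turning_angle_def cos_half_turn_def by (simp add: cos_half_vec_angle_eq_0_iff)
qed


text \<open>By compactness, \<open>g\<close> stays away from \<open>g s\<close> on the rest of a period.\<close>
lemma curve_points_near:
  assumes "0 < h"
  shows "\<exists>\<rho>>0. \<forall>p\<in>curve_set g. dist p (g s) < \<rho> \<longrightarrow> (\<exists>x. \<bar>x\<bar> < h \<and> p = g (s + x))"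
proof -
  define h' where "h' = min h (1/2)"
  define K where "K = {s - 1/2..s + 1/2} \<inter> {t. h' \<le> \<bar>t - s\<bar>}"
  have "compact K"
    unfolding K_def by (intro compact_Int_closed closed_Collect_le continuous_intros) auto
  have "0 < h'"
    using \<open>0 < h\<close> by (simp add: h'_def)
  have far: "0 < dist (g t) (g s)" if "t \<in> K" for t
  proof -
    have "t \<noteq> s" "\<bar>t - s\<bar> < 1"
      using that \<open>0 < h'\<close> by (auto simp: K_def)
    then show ?thesis
      using g_neq_abs by simp
  qed
  obtain \<rho> where \<rho>: "0 < \<rho>" "\<forall>t\<in>K. \<rho> \<le> dist (g t) (g s)"
  proof (cases "K = {}")
    case False
    have "continuous_on K (\<lambda>t. dist (g t) (g s))"
      using isCont_g by (intro continuous_intros continuous_at_imp_continuous_on) auto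
    then obtain t0 where "t0 \<in> K" "\<forall>t\<in>K. dist (g t0) (g s) \<le> dist (g t) (g s)"
      using continuous_attains_inf[OF \<open>compact K\<close> False] by blast
    then show ?thesis
      using that far by blast
  qed (use that[of 1] in auto)
  have "\<exists>x. \<bar>x\<bar> < h \<and> p = g (s + x)" if "p \<in> curve_set g" "dist p (g s) < \<rho>" for p
  proof -
    obtain \<sigma> where "p = g \<sigma>"
      using \<open>p \<in> curve_set g\<close> by (auto simp: curve_set_eq_range)
    define x where "x = \<sigma> - of_int \<lfloor>\<sigma> - s + 1/2\<rfloor> - s"
    have "p = g (s + x)"
      using g_diff_of_int[of \<sigma>] \<open>p = g \<sigma>\<close> by (simp add: x_def)
    moreover have "- (1/2) \<le> x" "x \<le> 1/2"
      unfolding x_def by linarith+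
    moreover from calculation have "s + x \<notin> K"
      using \<rho>(2) \<open>dist p (g s) < \<rho>\<close> by force
    ultimately have "\<bar>x\<bar> < h"
      by (auto simp: K_def h'_def)
    then show ?thesis
      using \<open>p = g (s + x)\<close> by blast
  qed
  then show ?thesis
    using \<rho>(1) by blast
qed

lemma arc_len_small:
  assumes "0 < e"
  shows "\<exists>h>0. \<forall>h'. 0 < h' \<and> h' \<le> h \<longrightarrow> arc_len g x (x + h') \<le> e \<and> arc_len g (x - h') x \<le> e"
proof -
  obtain hR where hR: "0 < hR" "\<forall>xs. sorted_wrt (<) xs \<and> set xs \<subseteq> {x..x + hR} \<longrightarrow> polygon_turning (map g xs) \<le> 1/2"
    using turning_vanishes_at_right_g[of x] unfolding turning_vanishes_at_right_def by (meson half_gt_zero zero_less_one)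
  obtain hL where hL: "0 < hL" "\<forall>xs. sorted_wrt (<) xs \<and> set xs \<subseteq> {x - hL..x} \<longrightarrow> polygon_turning (map g xs) \<le> 1/2"
    using turning_vanishes_at_left_g[of x] unfolding turning_vanishes_at_left_def by (meson half_gt_zero zero_less_one)
  obtain d where d: "0 < d" "\<forall>t. dist t x < d \<longrightarrow> dist (g t) (g x) < e / 2"
    using isCont_g[of x] \<open>0 < e\<close> unfolding continuous_at_eps_delta by (meson half_gt_zero)
  define h where "h = min (min hR hL) (d / 2)"
  have "arc_len g x (x + h') \<le> e \<and> arc_len g (x - h') x \<le> e" if "0 < h'" "h' \<le> h" for h'
  proof
    have "h' \<le> hR" "h' \<le> hL" "h' < d"
      using that d(1) by (auto simp: h_def)
    have "(1 - 1/2) * arc_len g x (x + h') \<le> dist (g x) (g (x + h'))"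
      using \<open>0 < h'\<close> \<open>h' \<le> hR\<close> by (intro arc_len_le_chord[OF _ hR(2)]) auto
    moreover have "dist (g (x + h')) (g x) < e / 2"
      using d(2) \<open>0 < h'\<close> \<open>h' < d\<close> by (simp add: dist_real_def)
    ultimately show "arc_len g x (x + h') \<le> e"
      by (simp add: dist_commute)
    have "(1 - 1/2) * arc_len g (x - h') x \<le> dist (g (x - h')) (g x)"
      using \<open>0 < h'\<close> \<open>h' \<le> hL\<close> by (intro arc_len_le_chord[OF _ hL(2)]) auto
    moreover have "dist (g (x - h')) (g x) < e / 2"
      using d(2) \<open>0 < h'\<close> \<open>h' < d\<close> by (simp add: dist_real_def)
    ultimately show "arc_len g (x - h') x \<le> e"
      by simp
  qed
  moreover have "0 < h"
    using hR(1) hL(1) d(1) by (simp add: h_def)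
  ultimately show ?thesis
    by blast
qed

section \<open>Distortion near the diagonal and upper semicontinuity\<close>

lemma delta_le_distortion:
  "p \<in> curve_set g \<Longrightarrow> q \<in> curve_set g \<Longrightarrow> p \<noteq> q \<Longrightarrow> delta g p q \<le> distortion g"
  unfolding distortion_def by (rule SUP_upper2[of "(p, q)"]) auto

lemma equidistant_points:
  assumes "0 < \<delta>" "\<delta> \<le> 1/4"
  obtains x y a where "0 < x" "x \<le> \<delta>" "0 < y" "y \<le> \<delta>" "0 < a" "a < dist (g (s + 1/2)) (g s) / 2"
    "dist (g (s - x)) (g s) = a" "dist (g (s + y)) (g s) = a"
proof -
  define m where "m = dist (g (s + 1/2)) (g s)"
  have "0 < m"
    using g_neq_abs[of "s + 1/2" s] by (simp add: m_def)
  define A where "A = dist (g (s + \<delta>)) (g s)"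
  have "0 < A"
    using g_neq_abs[of "s + \<delta>" s] assms by (simp add: A_def)
  obtain \<rho> where \<rho>: "0 < \<rho>" "\<forall>t. dist t s < \<rho> \<longrightarrow> dist (g t) (g s) < min A (m / 2)"
    using isCont_g[of s, unfolded continuous_at_eps_delta, rule_format, of "min A (m / 2)"] \<open>0 < A\<close> \<open>0 < m\<close>
    by auto
  define x where "x = min (\<rho> / 2) \<delta>"
  have x: "0 < x" "x \<le> \<delta>" "x < \<rho>"
    using \<rho>(1) assms by (auto simp: x_def)
  define a where "a = dist (g (s - x)) (g s)"
  have "a < A" "a < m / 2"
    using \<rho>(2)[rule_format, of "s - x"] x by (auto simp: a_def dist_real_def)
  have "0 < a"
    using g_neq_abs[of "s - x" s] x assms by (simp add: a_def)
  have "continuous_on {0..\<delta>} (\<lambda>t. dist (g (s + t)) (g s))"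
    by (intro continuous_at_imp_continuous_on ballI continuous_intros isCont_o2[OF _ isCont_g])
  then obtain y where y: "0 \<le> y" "y \<le> \<delta>" "dist (g (s + y)) (g s) = a"
    using IVT'[of "\<lambda>t. dist (g (s + t)) (g s)" 0 a \<delta>] \<open>0 < a\<close> \<open>a < A\<close> assms(1) by (auto simp: A_def)
  moreover have "0 < y"
    using y \<open>0 < a\<close> by (cases "y = 0") auto
  ultimately show ?thesis
    using x \<open>0 < a\<close> \<open>a < m / 2\<close> by (intro that[of x y a]) (auto simp: a_def m_def)
qed

text \<open>The long arc passes through \<open>g (s + 1/2)\<close>, which is far from \<open>g s\<close>.\<close>
lemma Len_ge_equidistant:
  assumes "0 < x" "x \<le> 1/4" "0 < y" "y \<le> 1/4" "a < dist (g (s + 1/2)) (g s) / 2"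
    and "dist (g (s - x)) (g s) = a" "dist (g (s + y)) (g s) = a"
  shows "2 * a \<le> Len g (g (s - x)) (g (s + y))"
proof -
  define m p q where "m = dist (g (s + 1/2)) (g s)" and "p = g (s - x)" and "q = g (s + y)"
  have "Len g p q = min (arc_len g (s - x) (s + y)) (arc_len g (s + y) (s - x + 1))"
    unfolding p_def q_def using assms(1-4) by (intro Len_g_g) auto
  moreover have "2 * a \<le> arc_len g (s - x) (s + y)"
    using dist_add_dist_le_arc_len[of "s - x" s "s + y"] assms by (simp add: dist_commute)
  moreover have "2 * a \<le> arc_len g (s + y) (s - x + 1)"
  proof -
    have "dist q (g (s + 1/2)) + dist (g (s + 1/2)) p \<le> arc_len g (s + y) (s - x + 1)"
      using dist_add_dist_le_arc_len[of "s + y" "s + 1/2" "s - x + 1"] assms(1-4) g_add_of_int[of "s - x" 1]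
      by (simp add: p_def q_def)
    moreover have "m \<le> dist (g (s + 1/2)) q + a" "m \<le> dist (g (s + 1/2)) p + a"
      using dist_triangle[of "g (s + 1/2)" "g s" q] dist_triangle[of "g (s + 1/2)" "g s" p] assms(6,7)
      by (simp_all add: m_def q_def p_def dist_commute)
    ultimately show ?thesis
      using assms(5) by (simp add: m_def dist_commute)
  qed
  ultimately show ?thesis
    by (simp add: p_def q_def)
qed

text \<open>Both arcs between points equidistant from \<open>g s\<close> are at least twice that distance, while
  the chord is about that distance times the sum of the one-sided tangents.\<close>
lemma Len_div_dist_near_corner:
  assumes "0 < \<eta>"
  shows "\<exists>x y. g (s - x) \<noteq> g (s + y) \<and>
     1 / (cos_half_turn s + \<eta>) \<le> Len g (g (s - x)) (g (s + y)) / dist (g (s - x)) (g (s + y))"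
proof -
  obtain hp where hp: "0 < hp" "\<forall>t. 0 < t \<and> t < hp \<longrightarrow> norm (sgn (g (s + t) - g s) - right_tangent s) < \<eta>"
    using right_tangent_approx[OF assms] by blast
  obtain hm where hm: "0 < hm" "\<forall>t. 0 < t \<and> t < hm \<longrightarrow> norm (sgn (g s - g (s - t)) - left_tangent s) < \<eta>"
    using left_tangent_approx[OF assms] by blast
  define \<delta> where "\<delta> = min (min hp hm) (1/2) / 2"
  have \<delta>: "0 < \<delta>" "\<delta> < hp" "\<delta> < hm" "\<delta> \<le> 1/4"
    using hp(1) hm(1) by (auto simp: \<delta>_def)
  obtain x y a where xya: "0 < x" "x \<le> \<delta>" "0 < y" "y \<le> \<delta>" "0 < a" "a < dist (g (s + 1/2)) (g s) / 2"
    "dist (g (s - x)) (g s) = a" "dist (g (s + y)) (g s) = a"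
    using equidistant_points[OF \<delta>(1,4)] by blast
  define p q where "p = g (s - x)" and "q = g (s + y)"
  have "p \<noteq> q"
    using g_neq[of "s - x" "s + y"] xya \<delta>(4) by (simp add: p_def q_def)
  have "dist p q \<le> a * (norm (left_tangent s + right_tangent s) + 2 * \<eta>)"
    using xya hm(2)[rule_format, of x] hp(2)[rule_format, of y] \<delta>
    by (intro dist_le_equal_legs) (simp_all add: p_def q_def dist_commute)
  then have "dist p q \<le> 2 * a * (cos_half_turn s + \<eta>)"
    by (simp add: norm_tangents_add algebra_simps)
  moreover have "2 * a \<le> Len g p q"
    unfolding p_def q_def using xya \<delta>(4) by (intro Len_ge_equidistant) auto
  moreover have "0 < cos_half_turn s + \<eta>"
    using assms by (simp add: cos_half_turn_def add_nonneg_pos cos_half_vec_angle_nonneg)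
  moreover have "0 < dist p q"
    using \<open>p \<noteq> q\<close> by simp
  ultimately have "1 / (cos_half_turn s + \<eta>) \<le> Len g p q / dist p q"
  proof -
    assume "dist p q \<le> 2 * a * (cos_half_turn s + \<eta>)" "2 * a \<le> Len g p q"
      "0 < cos_half_turn s + \<eta>" "0 < dist p q"
    then have "1 / (cos_half_turn s + \<eta>) = 2 * a / (2 * a * (cos_half_turn s + \<eta>))"
      using \<open>0 < a\<close> by simp
    also have "\<dots> \<le> 2 * a / dist p q"
      using \<open>0 < a\<close> \<open>dist p q \<le> 2 * a * (cos_half_turn s + \<eta>)\<close> \<open>0 < dist p q\<close>
        \<open>0 < cos_half_turn s + \<eta>\<close> by (intro divide_left_mono) auto
    also have "\<dots> \<le> Len g p q / dist p q"
      using \<open>2 * a \<le> Len g p q\<close> \<open>0 < dist p q\<close> by (simp add: divide_right_mono)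
    finally show ?thesis .
  qed
  then show ?thesis
    using \<open>p \<noteq> q\<close> unfolding p_def q_def by blast
qed

lemma delta_diagonal_le_distortion:
  assumes "s \<in> {0..<1}"
  shows "delta g (g s) (g s) \<le> distortion g"
proof -
  have "ereal (1 / (cos_half_turn s + \<eta>)) \<le> distortion g" if \<eta>: "0 < \<eta>" for \<eta>
  proof -
    obtain x y where xy: "g (s - x) \<noteq> g (s + y)"
      "1 / (cos_half_turn s + \<eta>) \<le> Len g (g (s - x)) (g (s + y)) / dist (g (s - x)) (g (s + y))"
      using Len_div_dist_near_corner[OF \<eta>] by blast
    then have "ereal (1 / (cos_half_turn s + \<eta>)) \<le> delta g (g (s - x)) (g (s + y))"
      by (simp add: delta_def)
    also have "\<dots> \<le> distortion g"
      using xy(1) by (intro delta_le_distortion) (auto simp: curve_set_eq_range)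
    finally show ?thesis .
  qed
  then show ?thesis
    unfolding delta_g_g[OF assms]
    by (intro ereal_inverse_le_if_inverse_add_le) (simp_all add: cos_half_turn_def cos_half_vec_angle_nonneg)
qed

lemma arc_len_across_corner_le:
  assumes "x < 0" "0 < y" "\<epsilon> < 1" "\<eta> \<le> cos_half_turn s"
    and left: "\<forall>xs. sorted_wrt (<) xs \<and> set xs \<subseteq> {s + x..s} \<longrightarrow> polygon_turning (map g xs) \<le> \<epsilon>"
    and right: "\<forall>xs. sorted_wrt (<) xs \<and> set xs \<subseteq> {s..s + y} \<longrightarrow> polygon_turning (map g xs) \<le> \<epsilon>"
    and "norm (sgn (g s - g (s + x)) - left_tangent s) < \<eta>"
    and "norm (sgn (g (s + y) - g s) - right_tangent s) < \<eta>"
  shows "(1 - \<epsilon>) * (cos_half_turn s - \<eta>) * arc_len g (s + x) (s + y) \<le> dist (g (s + x)) (g (s + y))"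
proof -
  define p q r where "p = g (s + x)" and "q = g (s + y)" and "r = g s"
  define A B where "A = dist p r" and "B = dist r q"
  have "(1 - \<epsilon>) * arc_len g (s + x) s \<le> A"
    using assms(1) unfolding A_def p_def r_def by (intro arc_len_le_chord[OF \<open>\<epsilon> < 1\<close> left]) auto
  moreover have "(1 - \<epsilon>) * arc_len g s (s + y) \<le> B"
    using assms(2) unfolding B_def q_def r_def by (intro arc_len_le_chord[OF \<open>\<epsilon> < 1\<close> right]) auto
  moreover have "(1 - \<epsilon>) * arc_len g (s + x) (s + y) \<le> (1 - \<epsilon>) * (arc_len g (s + x) s + arc_len g s (s + y))"
    using assms(1-3) arc_len_triangle[of "s + x" s "s + y"] by (intro mult_left_mono) auto
  ultimately have "(1 - \<epsilon>) * arc_len g (s + x) (s + y) \<le> A + B"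
    by (simp add: distrib_left)
  then have "(1 - \<epsilon>) * arc_len g (s + x) (s + y) * (cos_half_turn s - \<eta>) \<le> (A + B) * (cos_half_turn s - \<eta>)"
    using assms(4) by (intro mult_right_mono) auto
  also have "\<dots> \<le> norm (A *\<^sub>R sgn (r - p) + B *\<^sub>R sgn (q - r))"
    using assms(7,8) unfolding cos_half_turn_def
    by (intro norm_scaleR_add_ge_approx[OF left_tangent(1) right_tangent(1)]) (simp_all add: A_def B_def p_def q_def r_def)
  also have "A *\<^sub>R sgn (r - p) + B *\<^sub>R sgn (q - r) = q - p"
    using scaleR_norm_sgn[of "r - p"] scaleR_norm_sgn[of "q - r"]
    by (simp add: A_def B_def dist_norm norm_minus_commute[of p r] norm_minus_commute[of r q])
  finally show ?thesis
    by (simp add: p_def q_def dist_norm norm_minus_commute ac_simps)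
qed

text \<open>Near \<open>g s\<close> the curve is almost two straight segments meeting at the turning angle.\<close>
lemma arc_len_le_dist_near_point:
  assumes "0 < cos_half_turn s" "0 < \<epsilon>" "\<epsilon> < 1"
  shows "\<exists>h>0. \<forall>x y. x < y \<longrightarrow> \<bar>x\<bar> < h \<longrightarrow> \<bar>y\<bar> < h \<longrightarrow>
    (1 - \<epsilon>) * (cos_half_turn s * (1 - \<epsilon>)) * arc_len g (s + x) (s + y) \<le> dist (g (s + x)) (g (s + y))"
proof -
  define k where "k = cos_half_turn s"
  have "0 \<le> k * (1 - \<epsilon>)" "k * (1 - \<epsilon>) \<le> 1"
    using assms by (simp_all add: k_def cos_half_turn_def mult_le_one)
  obtain hR where hR: "0 < hR" "\<forall>xs. sorted_wrt (<) xs \<and> set xs \<subseteq> {s..s + hR} \<longrightarrow> polygon_turning (map g xs) \<le> \<epsilon>"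
    using turning_vanishes_at_right_g[of s] \<open>0 < \<epsilon>\<close> unfolding turning_vanishes_at_right_def by blast
  obtain hL where hL: "0 < hL" "\<forall>xs. sorted_wrt (<) xs \<and> set xs \<subseteq> {s - hL..s} \<longrightarrow> polygon_turning (map g xs) \<le> \<epsilon>"
    using turning_vanishes_at_left_g[of s] \<open>0 < \<epsilon>\<close> unfolding turning_vanishes_at_left_def by blast
  have "0 < k * \<epsilon>"
    using assms by (simp add: k_def)
  obtain hp where hp: "0 < hp" "\<forall>t. 0 < t \<and> t < hp \<longrightarrow> norm (sgn (g (s + t) - g s) - right_tangent s) < k * \<epsilon>"
    using right_tangent_approx[OF \<open>0 < k * \<epsilon>\<close>] by blast
  obtain hm where hm: "0 < hm" "\<forall>t. 0 < t \<and> t < hm \<longrightarrow> norm (sgn (g s - g (s - t)) - left_tangent s) < k * \<epsilon>"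
    using left_tangent_approx[OF \<open>0 < k * \<epsilon>\<close>] by blast
  define h where "h = min (min hR hL) (min hp hm)"
  have h: "0 < h" "h \<le> hR" "h \<le> hL" "h \<le> hp" "h \<le> hm"
    using hR(1) hL(1) hp(1) hm(1) by (auto simp: h_def)
  have "(1 - \<epsilon>) * (k * (1 - \<epsilon>)) * arc_len g (s + x) (s + y) \<le> dist (g (s + x)) (g (s + y))"
    if xy: "x < y" "\<bar>x\<bar> < h" "\<bar>y\<bar> < h" for x y
  proof -
    have "0 \<le> (1 - \<epsilon>) * arc_len g (s + x) (s + y)"
      using arc_len_nonneg[of "s + x" "s + y"] \<open>x < y\<close> \<open>\<epsilon> < 1\<close> by simp
    have "(1 - \<epsilon>) * (k * (1 - \<epsilon>)) * arc_len g (s + x) (s + y) =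
        (k * (1 - \<epsilon>)) * ((1 - \<epsilon>) * arc_len g (s + x) (s + y))"
      by (simp add: ac_simps)
    also have "\<dots> \<le> (1 - \<epsilon>) * arc_len g (s + x) (s + y)"
      using \<open>0 \<le> (1 - \<epsilon>) * arc_len g (s + x) (s + y)\<close> \<open>0 \<le> k * (1 - \<epsilon>)\<close> \<open>k * (1 - \<epsilon>) \<le> 1\<close>
      by (rule mult_left_le_one_le)
    finally have shrink: "(1 - \<epsilon>) * (k * (1 - \<epsilon>)) * arc_len g (s + x) (s + y) \<le> (1 - \<epsilon>) * arc_len g (s + x) (s + y)" .
    consider "0 \<le> x" | "y \<le> 0" | "x < 0" "0 < y"
      by linarith
    then show ?thesis
    proof cases
      case 1
      then have "(1 - \<epsilon>) * arc_len g (s + x) (s + y) \<le> dist (g (s + x)) (g (s + y))"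
        using xy h by (intro arc_len_le_chord[OF \<open>\<epsilon> < 1\<close> hR(2)]) auto
      then show ?thesis
        using shrink by linarith
    next
      case 2
      then have "(1 - \<epsilon>) * arc_len g (s + x) (s + y) \<le> dist (g (s + x)) (g (s + y))"
        using xy h by (intro arc_len_le_chord[OF \<open>\<epsilon> < 1\<close> hL(2)]) auto
      then show ?thesis
        using shrink by linarith
    next
      case 3
      have "{s + x..s} \<subseteq> {s - hL..s}" "{s..s + y} \<subseteq> {s..s + hR}"
        using 3 xy h by auto
      have "(1 - \<epsilon>) * (cos_half_turn s - k * \<epsilon>) * arc_len g (s + x) (s + y) \<le> dist (g (s + x)) (g (s + y))"
      proof (rule arc_len_across_corner_le)
        show "\<forall>xs. sorted_wrt (<) xs \<and> set xs \<subseteq> {s + x..s} \<longrightarrow> polygon_turning (map g xs) \<le> \<epsilon>"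
          using hL(2) \<open>{s + x..s} \<subseteq> {s - hL..s}\<close> by blast
        show "\<forall>xs. sorted_wrt (<) xs \<and> set xs \<subseteq> {s..s + y} \<longrightarrow> polygon_turning (map g xs) \<le> \<epsilon>"
          using hR(2) \<open>{s..s + y} \<subseteq> {s..s + hR}\<close> by blast
        show "k * \<epsilon> \<le> cos_half_turn s"
          using assms by (simp add: k_def mult_left_le)
        show "norm (sgn (g s - g (s + x)) - left_tangent s) < k * \<epsilon>"
          using hm(2)[rule_format, of "- x"] 3 xy h by simp
        show "norm (sgn (g (s + y) - g s) - right_tangent s) < k * \<epsilon>"
          using hp(2)[rule_format, of y] 3 xy h by simp
      qed (use 3 \<open>\<epsilon> < 1\<close> in auto)
      then show ?thesis
        by (simp add: k_def algebra_simps)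
    qed
  qed
  then show ?thesis
    using h(1) unfolding k_def by blast
qed

lemma Len_div_dist_le_near_point:
  assumes "0 < cos_half_turn s" "1 / cos_half_turn s < c"
  shows "\<exists>h>0. \<forall>x y. x < y \<longrightarrow> \<bar>x\<bar> < h \<longrightarrow> \<bar>y\<bar> < h \<longrightarrow>
           Len g (g (s + x)) (g (s + y)) / dist (g (s + x)) (g (s + y)) \<le> c"
proof -
  define k where "k = cos_half_turn s"
  have "0 < k" "1 < c * k"
    using assms by (simp_all add: k_def field_simps)
  then have "0 < c * k"
    by linarith
  then have "0 < c"
    using \<open>0 < k\<close> by (simp add: zero_less_mult_iff)
  define t where "t = 1 / (c * k)"
  have "0 < t" "t < 1"
    using \<open>0 < k\<close> \<open>0 < c\<close> \<open>1 < c * k\<close> by (simp_all add: t_def)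
  define \<epsilon> where "\<epsilon> = (1 - t) / 2"
  have "0 < \<epsilon>" "\<epsilon> < 1"
    using \<open>0 < t\<close> \<open>t < 1\<close> by (simp_all add: \<epsilon>_def)
  have "1 / c = k * (1 - 2 * \<epsilon>)"
    using \<open>0 < k\<close> \<open>0 < c\<close> by (simp add: \<epsilon>_def t_def field_simps)
  also have "\<dots> \<le> (1 - \<epsilon>) * (k * (1 - \<epsilon>))"
    using \<open>0 < k\<close> mult_nonneg_nonneg[of "\<epsilon> * \<epsilon>" k] by (simp add: algebra_simps)
  finally have "1 / c \<le> (1 - \<epsilon>) * (k * (1 - \<epsilon>))" .
  obtain h0 where h0: "0 < h0" "\<forall>x y. x < y \<longrightarrow> \<bar>x\<bar> < h0 \<longrightarrow> \<bar>y\<bar> < h0 \<longrightarrow>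
      (1 - \<epsilon>) * (k * (1 - \<epsilon>)) * arc_len g (s + x) (s + y) \<le> dist (g (s + x)) (g (s + y))"
    using arc_len_le_dist_near_point[OF assms(1) \<open>0 < \<epsilon>\<close> \<open>\<epsilon> < 1\<close>] unfolding k_def by blast
  define h where "h = min h0 (1/2)"
  have h: "0 < h" "h \<le> h0" "h \<le> 1/2"
    using h0(1) by (auto simp: h_def)
  have "Len g (g (s + x)) (g (s + y)) / dist (g (s + x)) (g (s + y)) \<le> c"
    if xy: "x < y" "\<bar>x\<bar> < h" "\<bar>y\<bar> < h" for x y
  proof -
    have "x < y" "y < x + 1"
      using xy h by auto
    have "0 < dist (g (s + x)) (g (s + y))"
      using g_neq[of "s + x" "s + y"] xy h by auto
    have "1 / c * arc_len g (s + x) (s + y) \<le> (1 - \<epsilon>) * (k * (1 - \<epsilon>)) * arc_len g (s + x) (s + y)"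
      using \<open>1 / c \<le> (1 - \<epsilon>) * (k * (1 - \<epsilon>))\<close> arc_len_nonneg[of "s + x" "s + y"] \<open>x < y\<close>
      by (intro mult_right_mono) auto
    also have "\<dots> \<le> dist (g (s + x)) (g (s + y))"
      using h0(2) h xy by auto
    finally have "arc_len g (s + x) (s + y) \<le> c * dist (g (s + x)) (g (s + y))"
      using \<open>0 < c\<close> by (simp add: field_simps)
    moreover have "Len g (g (s + x)) (g (s + y)) \<le> arc_len g (s + x) (s + y)"
      using \<open>x < y\<close> \<open>y < x + 1\<close> by (simp add: Len_g_g)
    ultimately show ?thesis
      using \<open>0 < dist (g (s + x)) (g (s + y))\<close> by (simp add: divide_le_eq)
  qed
  then show ?thesis
    using h(1) by blast
qed

lemma delta_le_near_diagonal:
  assumes "s \<in> {0..<1}" "delta g (g s) (g s) < ereal c"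
  shows "\<exists>\<rho>>0. \<forall>p\<in>curve_set g. \<forall>q\<in>curve_set g. p \<noteq> q \<longrightarrow>
           dist p (g s) < \<rho> \<longrightarrow> dist q (g s) < \<rho> \<longrightarrow> delta g p q \<le> ereal c"
proof -
  have "cos_half_turn s \<noteq> 0" "1 / cos_half_turn s < c"
    using assms delta_g_g[OF assms(1)] by (auto split: if_splits)
  moreover have "0 \<le> cos_half_turn s"
    by (simp add: cos_half_turn_def cos_half_vec_angle_nonneg)
  ultimately obtain h where h: "0 < h" "\<forall>x y. x < y \<longrightarrow> \<bar>x\<bar> < h \<longrightarrow> \<bar>y\<bar> < h \<longrightarrow>
      Len g (g (s + x)) (g (s + y)) / dist (g (s + x)) (g (s + y)) \<le> c"
    using Len_div_dist_le_near_point[of s c] by auto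
  obtain \<rho> where \<rho>: "0 < \<rho>" "\<forall>p\<in>curve_set g. dist p (g s) < \<rho> \<longrightarrow> (\<exists>x. \<bar>x\<bar> < h \<and> p = g (s + x))"
    using curve_points_near[OF h(1)] by blast
  have "delta g p q \<le> ereal c"
    if pq: "p \<in> curve_set g" "q \<in> curve_set g" "p \<noteq> q" "dist p (g s) < \<rho>" "dist q (g s) < \<rho>" for p q
  proof -
    obtain x y where "\<bar>x\<bar> < h" "p = g (s + x)" "\<bar>y\<bar> < h" "q = g (s + y)"
      using \<rho>(2) pq by meson
    moreover have "x \<noteq> y"
      using pq(3) calculation by auto
    then consider "x < y" | "y < x"
      by linarith
    then have "Len g p q / dist p q \<le> c"
    proof cases
      case 1
      then show ?thesis
        using h(2) \<open>\<bar>x\<bar> < h\<close> \<open>\<bar>y\<bar> < h\<close> \<open>p = g (s + x)\<close> \<open>q = g (s + y)\<close> by blast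
    next
      case 2
      then have "Len g q p / dist q p \<le> c"
        using h(2) \<open>\<bar>x\<bar> < h\<close> \<open>\<bar>y\<bar> < h\<close> \<open>p = g (s + x)\<close> \<open>q = g (s + y)\<close> by blast
      then show ?thesis
        by (simp add: Len_commute dist_commute)
    qed
    then show ?thesis
      using pq(3) by (simp add: delta_def)
  qed
  then show ?thesis
    using \<rho>(1) by blast
qed

lemma Len_le_near_pair:
  assumes "\<sigma> < \<tau>" "\<tau> < \<sigma> + 1" "0 < e"
  shows "\<exists>h>0. \<forall>x y. \<bar>x\<bar> < h \<longrightarrow> \<bar>y\<bar> < h \<longrightarrow> Len g (g (\<sigma> + x)) (g (\<tau> + y)) \<le> Len g (g \<sigma>) (g \<tau>) + e"
proof -
  obtain h\<sigma> where h\<sigma>: "0 < h\<sigma>" "\<forall>h'. 0 < h' \<and> h' \<le> h\<sigma> \<longrightarrow> arc_len g \<sigma> (\<sigma> + h') \<le> e / 2 \<and> arc_len g (\<sigma> - h') \<sigma> \<le> e / 2"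
    using arc_len_small[of "e / 2" \<sigma>] \<open>0 < e\<close> by auto
  obtain h\<tau> where h\<tau>: "0 < h\<tau>" "\<forall>h'. 0 < h' \<and> h' \<le> h\<tau> \<longrightarrow> arc_len g \<tau> (\<tau> + h') \<le> e / 2 \<and> arc_len g (\<tau> - h') \<tau> \<le> e / 2"
    using arc_len_small[of "e / 2" \<tau>] \<open>0 < e\<close> by auto
  define h where "h = min (min h\<sigma> h\<tau>) (min ((\<tau> - \<sigma>) / 4) ((\<sigma> + 1 - \<tau>) / 4))"
  have "h \<le> min h\<sigma> h\<tau>" "h \<le> min ((\<tau> - \<sigma>) / 4) ((\<sigma> + 1 - \<tau>) / 4)"
    unfolding h_def by (rule min.cobounded1 min.cobounded2)+
  moreover have "0 < h"
    using h\<sigma>(1) h\<tau>(1) assms by (simp add: h_def)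
  ultimately have h: "0 < h" "h \<le> h\<sigma>" "h \<le> h\<tau>" "h \<le> (\<tau> - \<sigma>) / 4" "h \<le> (\<sigma> + 1 - \<tau>) / 4"
    by simp_all
  have small: "arc_len g \<sigma> (\<sigma> + h) \<le> e / 2" "arc_len g (\<sigma> - h) \<sigma> \<le> e / 2"
    "arc_len g \<tau> (\<tau> + h) \<le> e / 2" "arc_len g (\<tau> - h) \<tau> \<le> e / 2"
    using h\<sigma>(2) h\<tau>(2) h by auto
  have "Len g (g (\<sigma> + x)) (g (\<tau> + y)) \<le> Len g (g \<sigma>) (g \<tau>) + e" if "\<bar>x\<bar> < h" "\<bar>y\<bar> < h" for x y
  proof -
    have bounds: "\<sigma> - h \<le> \<sigma> + x" "\<sigma> + x \<le> \<tau> + y" "\<tau> + y \<le> \<tau> + h" "\<tau> - h \<le> \<tau> + y"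
      "\<tau> + y \<le> \<sigma> + x + 1" "\<sigma> + x + 1 \<le> \<sigma> + 1 + h"
      using that h by (auto simp: abs_less_iff)
    have "arc_len g (\<sigma> + x) (\<tau> + y) \<le> arc_len g (\<sigma> - h) (\<tau> + h)"
      using bounds by (intro arc_len_mono) auto
    also have "\<dots> \<le> arc_len g (\<sigma> - h) \<sigma> + (arc_len g \<sigma> \<tau> + arc_len g \<tau> (\<tau> + h))"
      using arc_len_triangle[of "\<sigma> - h" \<sigma> "\<tau> + h"] arc_len_triangle[of \<sigma> \<tau> "\<tau> + h"] h assms by auto
    finally have "arc_len g (\<sigma> + x) (\<tau> + y) \<le> arc_len g \<sigma> \<tau> + e"
      using small by linarith
    have "arc_len g (\<tau> + y) (\<sigma> + x + 1) \<le> arc_len g (\<tau> - h) (\<sigma> + 1 + h)"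
      using bounds by (intro arc_len_mono) auto
    also have "\<dots> \<le> arc_len g (\<tau> - h) \<tau> + (arc_len g \<tau> (\<sigma> + 1) + arc_len g (\<sigma> + 1) (\<sigma> + 1 + h))"
      using arc_len_triangle[of "\<tau> - h" \<tau> "\<sigma> + 1 + h"] arc_len_triangle[of \<tau> "\<sigma> + 1" "\<sigma> + 1 + h"] h assms
      by auto
    also have "arc_len g (\<sigma> + 1) (\<sigma> + 1 + h) = arc_len g \<sigma> (\<sigma> + h)"
      using arc_len_shift[of \<sigma> 1 "\<sigma> + h"] by (simp add: add_ac)
    finally have "arc_len g (\<tau> + y) (\<sigma> + x + 1) \<le> arc_len g \<tau> (\<sigma> + 1) + e"
      using small by linarith
    moreover have "Len g (g (\<sigma> + x)) (g (\<tau> + y)) = min (arc_len g (\<sigma> + x) (\<tau> + y)) (arc_len g (\<tau> + y) (\<sigma> + x + 1))"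
      using bounds by (intro Len_g_g) auto
    moreover have "Len g (g \<sigma>) (g \<tau>) = min (arc_len g \<sigma> \<tau>) (arc_len g \<tau> (\<sigma> + 1))"
      using assms by (intro Len_g_g) auto
    ultimately show ?thesis
      using \<open>arc_len g (\<sigma> + x) (\<tau> + y) \<le> arc_len g \<sigma> \<tau> + e\<close> by linarith
  qed
  then show ?thesis
    using h(1) by blast
qed

lemma Len_div_dist_le_near_pair:
  assumes "\<sigma> < \<tau>" "\<tau> < \<sigma> + 1" "Len g (g \<sigma>) (g \<tau>) / dist (g \<sigma>) (g \<tau>) < c"
  shows "\<exists>\<rho>>0. \<forall>p\<in>curve_set g. \<forall>q\<in>curve_set g. p \<noteq> q \<longrightarrow>
           dist p (g \<sigma>) < \<rho> \<longrightarrow> dist q (g \<tau>) < \<rho> \<longrightarrow> Len g p q / dist p q \<le> c"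
proof -
  define L d where "L = Len g (g \<sigma>) (g \<tau>)" and "d = dist (g \<sigma>) (g \<tau>)"
  have "0 \<le> L"
    using assms arc_len_nonneg[of \<sigma> \<tau>] arc_len_nonneg[of \<tau> "\<sigma> + 1"] by (simp add: L_def Len_g_g)
  have "0 < d"
    using g_neq[OF assms(1,2)] by (simp add: d_def)
  define \<gamma> where "\<gamma> = c * d - L"
  have "L < c * d"
    using assms(3) \<open>0 < d\<close> by (simp add: L_def d_def pos_divide_less_eq)
  then have "0 < \<gamma>" "0 < c * d"
    using \<open>0 \<le> L\<close> by (simp_all add: \<gamma>_def)
  then have "0 < c"
    using \<open>0 < d\<close> by (simp add: zero_less_mult_iff)
  obtain h where h: "0 < h" "\<forall>x y. \<bar>x\<bar> < h \<longrightarrow> \<bar>y\<bar> < h \<longrightarrow> Len g (g (\<sigma> + x)) (g (\<tau> + y)) \<le> L + \<gamma> / 2"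
    using Len_le_near_pair[OF assms(1,2), of "\<gamma> / 2"] \<open>0 < \<gamma>\<close> by (auto simp: L_def)
  obtain \<rho>1 where \<rho>1: "0 < \<rho>1" "\<forall>p\<in>curve_set g. dist p (g \<sigma>) < \<rho>1 \<longrightarrow> (\<exists>x. \<bar>x\<bar> < h \<and> p = g (\<sigma> + x))"
    using curve_points_near[OF h(1)] by blast
  obtain \<rho>2 where \<rho>2: "0 < \<rho>2" "\<forall>q\<in>curve_set g. dist q (g \<tau>) < \<rho>2 \<longrightarrow> (\<exists>y. \<bar>y\<bar> < h \<and> q = g (\<tau> + y))"
    using curve_points_near[OF h(1)] by blast
  define \<rho> where "\<rho> = min (min \<rho>1 \<rho>2) (min (d / 4) (\<gamma> / (4 * c)))"
  have "\<rho> \<le> min \<rho>1 \<rho>2" "\<rho> \<le> min (d / 4) (\<gamma> / (4 * c))"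
    unfolding \<rho>_def by (rule min.cobounded1 min.cobounded2)+
  moreover have "0 < \<rho>"
    using \<rho>1(1) \<rho>2(1) \<open>0 < d\<close> \<open>0 < \<gamma>\<close> \<open>0 < c\<close> by (simp add: \<rho>_def)
  ultimately have \<rho>: "0 < \<rho>" "\<rho> \<le> \<rho>1" "\<rho> \<le> \<rho>2" "\<rho> \<le> d / 4" "\<rho> \<le> \<gamma> / (4 * c)"
    by simp_all
  have "Len g p q / dist p q \<le> c"
    if pq: "p \<in> curve_set g" "q \<in> curve_set g" "dist p (g \<sigma>) < \<rho>" "dist q (g \<tau>) < \<rho>" for p q
  proof -
    obtain x y where "\<bar>x\<bar> < h" "p = g (\<sigma> + x)" "\<bar>y\<bar> < h" "q = g (\<tau> + y)"
      using \<rho>1(2) \<rho>2(2) \<rho> pq by force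
    have "d \<le> dist (g \<sigma>) p + dist p q + dist q (g \<tau>)"
      unfolding d_def using dist_triangle[of "g \<sigma>" "g \<tau>" p] dist_triangle[of p "g \<tau>" q] by linarith
    then have "d - 2 * \<rho> \<le> dist p q"
      using pq(3,4) by (simp add: dist_commute)
    have "Len g p q \<le> L + \<gamma> / 2"
      using h(2) \<open>\<bar>x\<bar> < h\<close> \<open>\<bar>y\<bar> < h\<close> \<open>p = g (\<sigma> + x)\<close> \<open>q = g (\<tau> + y)\<close> by blast
    also have "\<dots> \<le> c * (d - 2 * \<rho>)"
    proof -
      have "2 * c * \<rho> \<le> 2 * c * (\<gamma> / (4 * c))"
        using \<rho>(5) \<open>0 < c\<close> by (intro mult_left_mono) auto
      also have "\<dots> = \<gamma> / 2"
        using \<open>0 < c\<close> by simp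
      finally have "2 * c * \<rho> \<le> \<gamma> / 2" .
      moreover have "c * (d - 2 * \<rho>) = c * d - 2 * c * \<rho>" "L = c * d - \<gamma>"
        by (simp_all add: \<gamma>_def algebra_simps)
      ultimately show ?thesis
        by linarith
    qed
    also have "\<dots> \<le> c * dist p q"
      using \<open>d - 2 * \<rho> \<le> dist p q\<close> \<open>0 < c\<close> by simp
    finally have "Len g p q \<le> c * dist p q" .
    moreover have "0 < dist p q"
      using \<open>d - 2 * \<rho> \<le> dist p q\<close> \<rho>(4) \<open>0 < d\<close> by linarith
    ultimately show ?thesis
      by (simp add: divide_le_eq mult.commute)
  qed
  then show ?thesis
    using \<rho>(1) by blast
qed

lemma delta_upper_semicontinuous:
  assumes "p \<in> curve_set g" "q \<in> curve_set g" "delta g p q < c"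
  shows "\<exists>\<rho>>0. \<forall>p'\<in>curve_set g. \<forall>q'\<in>curve_set g. p' \<noteq> q' \<longrightarrow>
           dist p' p < \<rho> \<longrightarrow> dist q' q < \<rho> \<longrightarrow> delta g p' q' \<le> c"
proof -
  obtain c' where c': "delta g p q < ereal c'" "ereal c' < c"
    using ereal_dense2[OF assms(3)] by blast
  obtain \<sigma> \<tau> where \<sigma>\<tau>: "\<sigma> \<in> {0..<1}" "p = g \<sigma>" "\<tau> \<in> {0..<1}" "q = g \<tau>"
    using assms(1,2) by (auto simp: curve_set_def)
  have "\<exists>\<rho>>0. \<forall>p'\<in>curve_set g. \<forall>q'\<in>curve_set g. p' \<noteq> q' \<longrightarrow>
           dist p' p < \<rho> \<longrightarrow> dist q' q < \<rho> \<longrightarrow> delta g p' q' \<le> ereal c'"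
  proof (cases "p = q")
    case True
    then show ?thesis
      using delta_le_near_diagonal[OF \<sigma>\<tau>(1)] c'(1) \<sigma>\<tau>(2) by simp
  next
    case False
    then have ratio: "Len g p q / dist p q < c'"
      using c'(1) by (simp add: delta_def)
    have off_diagonal: "delta g p' q' = ereal (Len g p' q' / dist p' q')" if "p' \<noteq> q'" for p' q'
      using that by (simp add: delta_def)
    consider "\<sigma> < \<tau>" | "\<tau> < \<sigma>"
      using False \<sigma>\<tau> by (metis linorder_neqE_linordered_idom)
    then show ?thesis
    proof cases
      case 1
      then show ?thesis
        using Len_div_dist_le_near_pair[of \<sigma> \<tau> c'] ratio \<sigma>\<tau> by (auto simp: off_diagonal)
    next
      case 2
      then obtain \<rho> where \<rho>: "0 < \<rho>" "\<forall>q'\<in>curve_set g. \<forall>p'\<in>curve_set g. q' \<noteq> p' \<longrightarrow>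
           dist q' q < \<rho> \<longrightarrow> dist p' p < \<rho> \<longrightarrow> Len g q' p' / dist q' p' \<le> c'"
        using Len_div_dist_le_near_pair[of \<tau> \<sigma> c'] ratio \<sigma>\<tau> by (auto simp: Len_commute dist_commute)
      have "delta g p' q' \<le> ereal c'" if "p' \<in> curve_set g" "q' \<in> curve_set g" "p' \<noteq> q'"
        "dist p' p < \<rho>" "dist q' q < \<rho>" for p' q'
        using \<rho>(2)[rule_format, of q' p'] that by (simp add: off_diagonal Len_commute dist_commute)
      then show ?thesis
        using \<rho>(1) by blast
    qed
  qed
  then show ?thesis
    using c'(2) by (meson order_trans less_imp_le)
qed

lemma delta_le_distortion_curve_set:
  assumes "p \<in> curve_set g" "q \<in> curve_set g"
  shows "delta g p q \<le> distortion g"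
proof (cases "p = q")
  case True
  obtain s where "s \<in> {0..<1}" "p = g s"
    using assms(1) by (auto simp: curve_set_def)
  then show ?thesis
    using True delta_diagonal_le_distortion by simp
qed (use assms delta_le_distortion in auto)

definition chord_pairs :: "('a \<times> 'a) set" where
  "chord_pairs = {(p, q). p \<in> curve_set g \<and> q \<in> curve_set g \<and> p \<noteq> q}"

lemma distortion_eq_SUP_chord_pairs: "distortion g = (SUP z\<in>chord_pairs. case_prod (delta g) z)"
  unfolding distortion_def chord_pairs_def by simp

lemma delta_upper_semicontinuous_on_chord_pairs:
  assumes "z \<in> curve_set g \<times> curve_set g" "case_prod (delta g) z < c"
  shows "\<exists>U. open U \<and> z \<in> U \<and> (\<forall>y\<in>chord_pairs \<inter> U. case_prod (delta g) y \<le> c)"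
proof -
  obtain p q where "z = (p, q)" "p \<in> curve_set g" "q \<in> curve_set g" "delta g p q < c"
    using assms by auto
  then obtain \<rho> where "0 < \<rho>" "\<forall>p'\<in>curve_set g. \<forall>q'\<in>curve_set g. p' \<noteq> q' \<longrightarrow>
      dist p' p < \<rho> \<longrightarrow> dist q' q < \<rho> \<longrightarrow> delta g p' q' \<le> c"
    using delta_upper_semicontinuous by blast
  then show ?thesis
    using \<open>z = (p, q)\<close>
    by (intro exI[of _ "ball p \<rho> \<times> ball q \<rho>"]) (auto simp: chord_pairs_def open_Times dist_commute)
qed

end

theorem corollary7p3:
  fixes g :: "real \<Rightarrow> 'a::euclidean_space"
  assumes "simple_closed_curve g"
    and "finite_total_curvature g"
  shows "\<exists>p\<in>curve_set g. \<exists>q\<in>curve_set g. distortion g = delta g p q"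
proof -
  interpret ftc_closed_curve g
    using assms by unfold_locales
  have "\<exists>z\<in>curve_set g \<times> curve_set g. case_prod (delta g) z = distortion g"
    unfolding distortion_eq_SUP_chord_pairs
  proof (rule upper_semicontinuous_attains_SUP)
    show "compact (curve_set g \<times> curve_set g)"
      by (intro compact_Times compact_curve_set)
    show "chord_pairs \<subseteq> curve_set g \<times> curve_set g" "chord_pairs \<noteq> {}"
      using g_neq[of 0 "1/2"] by (auto simp: chord_pairs_def curve_set_eq_range)
  qed (use delta_upper_semicontinuous_on_chord_pairs delta_le_distortion_curve_set in
      \<open>auto simp flip: distortion_eq_SUP_chord_pairs\<close>)
  then show ?thesis
    by (metis (no_types, lifting) SigmaE case_prod_conv)
qed

end
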